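(* The class of ph-homogeneous partial cubes is closed under convex subgraphs, gated amalgams, and finite Cartesian products as well as (weak) Cartesian products of infinite families.
   Context: Graphs are simple, undirected, possibly infinite. In a connected graph $G$, $I_G(x,y)$ is the set of vertices on shortest $(x,y)$-paths; $A\subseteq V(G)$ is convex if $I_G(x,y)\subseteq A$ for all $x,y\in A$; $co_G(A)$ is the convex hull; a subgraph is convex if its vertex set is convex; $\mathcal{I}_G(A)=\bigcup_{x,y\in A}I_G(x,y)$. A partial cube is an isometric subgraph of a (possibly infinite) hypercube. A copoint at $x$ is a convex set maximal with respect to not containing $x$. The pre-hull number $ph(G)$ is the least $n$ with $co_G(C\cup\{x\})=\mathcal{I}^n_G(C\cup\{x\})$ for every vertex $x$ and every copoint $C$ at $x$. A graph is ph-homogeneous if each of its finite convex subgraphs has pre-hull number at most $1$. A set $A$ is gated if every vertex $x$ has a vertex $y\in A$ with $y\in I_G(x,z)$ for all $z\in A$. A graph $G$ is the gated amalgam of $G_0$ and $G_1$ if $G_0,G_1$ are isomorphic to two intersecting gated subgraphs of $G$ whose union is $G$. The weak Cartesian product of an infinite family of connected graphs is a connected component of their Cartesian product. *)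

theory Defs
  imports Main "HOL-Library.FuncSet"
begin

type_synonym 'a graph = "'a set \<times> ('a \<times> 'a) set"

definition verts :: "'a graph \<Rightarrow> 'a set" where
  "verts G = fst G"

definition edges :: "'a graph \<Rightarrow> ('a \<times> 'a) set" where
  "edges G = snd G"

definition graph :: "'a graph \<Rightarrow> bool" where
  "graph G \<longleftrightarrow> edges G \<subseteq> verts G \<times> verts G \<and> sym (edges G) \<and> irrefl (edges G)"

text \<open>A walk is a nonempty list of vertices, consecutive ones adjacent; it has
  length p - 1 (number of edges).\<close>
definition walk :: "'a graph \<Rightarrow> 'a list \<Rightarrow> bool" where
  "walk G p \<longleftrightarrow> p \<noteq> [] \<and> set p \<subseteq> verts G \<and>
     (\<forall>i. Suc i < length p \<longrightarrow> (p ! i, p ! Suc i) \<in> edges G)"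

definition connected_graph :: "'a graph \<Rightarrow> bool" where
  "connected_graph G \<longleftrightarrow> verts G \<noteq> {} \<and>
     (\<forall>x\<in>verts G. \<forall>y\<in>verts G. \<exists>p. walk G p \<and> hd p = x \<and> last p = y)"

definition induced :: "'a graph \<Rightarrow> 'a set \<Rightarrow> 'a graph" where
  "induced G A = (A, edges G \<inter> (A \<times> A))"

definition subgraph :: "'a graph \<Rightarrow> 'a graph \<Rightarrow> bool" where
  "subgraph H G \<longleftrightarrow> graph H \<and> verts H \<subseteq> verts G \<and> edges H \<subseteq> edges G"

definition graph_iso :: "'a graph \<Rightarrow> 'b graph \<Rightarrow> bool" where
  "graph_iso G H \<longleftrightarrow> (\<exists>f. bij_betw f (verts G) (verts H) \<and>
     (\<forall>u\<in>verts G. \<forall>v\<in>verts G. (u, v) \<in> edges G \<longleftrightarrow> (f u, f v) \<in> edges H))"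

definition dist :: "'a graph \<Rightarrow> 'a \<Rightarrow> 'a \<Rightarrow> nat" where
  "dist G x y = (LEAST n. \<exists>p. walk G p \<and> hd p = x \<and> last p = y \<and> length p = Suc n)"

definition interval :: "'a graph \<Rightarrow> 'a \<Rightarrow> 'a \<Rightarrow> 'a set" where
  "interval G x y = {z. \<exists>p. walk G p \<and> hd p = x \<and> last p = y \<and>
      length p = Suc (dist G x y) \<and> z \<in> set p}"

definition convex :: "'a graph \<Rightarrow> 'a set \<Rightarrow> bool" where
  "convex G A \<longleftrightarrow> A \<subseteq> verts G \<and> (\<forall>x\<in>A. \<forall>y\<in>A. interval G x y \<subseteq> A)"

definition convex_hull :: "'a graph \<Rightarrow> 'a set \<Rightarrow> 'a set" where
  "convex_hull G A = \<Inter> {C. convex G C \<and> A \<subseteq> C}"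

definition interval_set :: "'a graph \<Rightarrow> 'a set \<Rightarrow> 'a set" where
  "interval_set G A = (\<Union>x\<in>A. \<Union>y\<in>A. interval G x y)"

definition copoint :: "'a graph \<Rightarrow> 'a \<Rightarrow> 'a set \<Rightarrow> bool" where
  "copoint G x C \<longleftrightarrow> convex G C \<and> x \<notin> C \<and>
     (\<forall>D. convex G D \<and> C \<subseteq> D \<and> x \<notin> D \<longrightarrow> D = C)"

text \<open>The defining property of the pre-hull number for a given n.\<close>
definition ph_property :: "'a graph \<Rightarrow> nat \<Rightarrow> bool" where
  "ph_property G n \<longleftrightarrow> (\<forall>x\<in>verts G. \<forall>C. copoint G x C \<longrightarrow>
      convex_hull G (insert x C) = (interval_set G ^^ n) (insert x C))"

text \<open>ph(G) \<le> k: the least n with ph_property exists and is at most k.\<close>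
definition ph_at_most :: "'a graph \<Rightarrow> nat \<Rightarrow> bool" where
  "ph_at_most G k \<longleftrightarrow> (\<exists>n\<le>k. ph_property G n)"

definition ph_homogeneous :: "'a graph \<Rightarrow> bool" where
  "ph_homogeneous G \<longleftrightarrow> (\<forall>A. finite A \<and> convex G A \<longrightarrow> ph_at_most (induced G A) 1)"

definition hypercube :: "'i set \<Rightarrow> 'i set graph" where
  "hypercube X = ({S. S \<subseteq> X \<and> finite S},
      {(S, T). S \<subseteq> X \<and> finite S \<and> T \<subseteq> X \<and> finite T \<and> card ((S - T) \<union> (T - S)) = 1})"

definition isometric_subgraph :: "'a graph \<Rightarrow> 'a graph \<Rightarrow> bool" where
  "isometric_subgraph H G \<longleftrightarrow> subgraph H G \<and> connected_graph H \<and>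
     (\<forall>u\<in>verts H. \<forall>v\<in>verts H. dist H u v = dist G u v)"

text \<open>Coordinates are taken in the type 'a set (e.g. half-spaces); this type is always
  large enough.\<close>
definition partial_cube :: "'a graph \<Rightarrow> bool" where
  "partial_cube G \<longleftrightarrow> graph G \<and>
     (\<exists>(X :: 'a set set) H. isometric_subgraph H (hypercube X) \<and> graph_iso G H)"

definition gated :: "'a graph \<Rightarrow> 'a set \<Rightarrow> bool" where
  "gated G A \<longleftrightarrow> A \<subseteq> verts G \<and>
     (\<forall>x\<in>verts G. \<exists>y\<in>A. \<forall>z\<in>A. y \<in> interval G x z)"

definition gated_amalgam :: "'a graph \<Rightarrow> 'b graph \<Rightarrow> 'c graph \<Rightarrow> bool" where
  "gated_amalgam G G0 G1 \<longleftrightarrow> graph G \<and> connected_graph G \<and>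
     (\<exists>A0 A1. gated G A0 \<and> gated G A1 \<and> A0 \<inter> A1 \<noteq> {} \<and>
        A0 \<union> A1 = verts G \<and>
        edges G = edges (induced G A0) \<union> edges (induced G A1) \<and>
        graph_iso (induced G A0) G0 \<and> graph_iso (induced G A1) G1)"

definition cart_prod :: "'i set \<Rightarrow> ('i \<Rightarrow> 'a graph) \<Rightarrow> ('i \<Rightarrow> 'a) graph" where
  "cart_prod I Gs = (PiE I (\<lambda>i. verts (Gs i)),
     {(f, g). f \<in> PiE I (\<lambda>i. verts (Gs i)) \<and> g \<in> PiE I (\<lambda>i. verts (Gs i)) \<and>
        (\<exists>i\<in>I. (f i, g i) \<in> edges (Gs i) \<and> (\<forall>j\<in>I. j \<noteq> i \<longrightarrow> f j = g j))})"

definition component :: "'a graph \<Rightarrow> 'a \<Rightarrow> 'a graph" where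
  "component G a = induced G {b. \<exists>p. walk G p \<and> hd p = a \<and> last p = b}"

definition weak_cart_prod :: "'i set \<Rightarrow> ('i \<Rightarrow> 'a graph) \<Rightarrow> ('i \<Rightarrow> 'a) \<Rightarrow> ('i \<Rightarrow> 'a) graph" where
  "weak_cart_prod I Gs a = component (cart_prod I Gs) a"

end

theory Submission
  imports Defs
begin

(* A connected graph is a partial cube iff its distance counts the cuts, taken from a family of
   vertex sets, that separate two vertices. Convex subgraphs inherit such cuts by restriction,
   products by the disjoint union of the factor cuts, and gated amalgams by pulling back the cuts
   of both sides along the gate maps, dropping the cuts of the second side that split the overlap.

   For ph-homogeneity one shows that the interval set \<I>(C \<union> {x}) of a copoint C at x is
   convex. In a product, C is a cylinder over a copoint of one factor, so \<I>(C \<union> {x}) is the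
   cylinder over the corresponding convex set of that factor; a finite convex subgraph of a weak
   product is itself a product of finite convex subgraphs of the factors. In a gated amalgam,
   the traces of C on the two sides are copoints at the gates of x (or contain these gates), and
   \<I>(C \<union> {x}) is the union of the two resulting convex interval sets, glued along a vertex of
   the overlap. *)

definition reach :: "'a graph \<Rightarrow> 'a \<Rightarrow> 'a \<Rightarrow> bool" where
  "reach G x y \<longleftrightarrow> (\<exists>p. walk G p \<and> hd p = x \<and> last p = y)"

lemma walk_nonempty: "walk G p \<Longrightarrow> p \<noteq> []"
  by (simp add: walk_def)

lemma walk_hd: "walk G p \<Longrightarrow> hd p \<in> verts G"
  by (auto simp: walk_def)

lemma walk_last: "walk G p \<Longrightarrow> last p \<in> verts G"
  by (auto simp: walk_def)

lemma walk_Cons: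
  "walk G (x # p) \<longleftrightarrow> x \<in> verts G \<and> (p = [] \<or> (walk G p \<and> (x, hd p) \<in> edges G))"
proof (cases p)
  case Nil
  then show ?thesis by (auto simp: walk_def)
next
  case (Cons y q)
  show ?thesis
  proof
    assume w: "walk G (x # p)"
    have "(p ! i, p ! Suc i) \<in> edges G" if "Suc i < length p" for i
      using w that unfolding walk_def by (metis Suc_less_eq length_Cons nth_Cons_Suc)
    moreover have "(x, hd p) \<in> edges G" using w Cons unfolding walk_def by force
    ultimately show "x \<in> verts G \<and> (p = [] \<or> (walk G p \<and> (x, hd p) \<in> edges G))"
      using w Cons unfolding walk_def by auto
  next
    assume h: "x \<in> verts G \<and> (p = [] \<or> (walk G p \<and> (x, hd p) \<in> edges G))"
    then have wp: "walk G p" and e: "(x, hd p) \<in> edges G" using Cons by auto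
    show "walk G (x # p)" unfolding walk_def
    proof (intro conjI allI impI)
      show "x # p \<noteq> []" by simp
      show "set (x # p) \<subseteq> verts G" using h wp by (auto simp: walk_def)
      fix i assume "Suc i < length (x # p)"
      then show "((x # p) ! i, (x # p) ! Suc i) \<in> edges G"
        using wp e Cons by (cases i) (auto simp: walk_def)
    qed
  qed
qed

lemma walk_append:
  assumes "walk G p" "walk G q" "last p = hd q"
  shows "walk G (p @ tl q)"
  using assms
proof (induction p)
  case Nil then show ?case by (simp add: walk_def)
next
  case (Cons x p)
  show ?case
  proof (cases p)
    case Nil
    then show ?thesis using Cons.prems by (cases q) auto
  next
    case (Cons y r)
    then have "walk G p" "(x, y) \<in> edges G" "x \<in> verts G" using Cons.prems by (auto simp: walk_Cons)
    moreover have "last p = hd q" using Cons.prems \<open>p = y # r\<close> by simp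
    ultimately have "walk G (p @ tl q)" using Cons.IH Cons.prems by blast
    then show ?thesis using \<open>p = y # r\<close> \<open>(x, y) \<in> edges G\<close> \<open>x \<in> verts G\<close>
      by (simp add: walk_Cons)
  qed
qed

lemma last_append_tl: "p \<noteq> [] \<Longrightarrow> q \<noteq> [] \<Longrightarrow> last p = hd q \<Longrightarrow> last (p @ tl q) = last q"
  by (cases q) auto

lemma walk_rev:
  assumes "graph G" "walk G p"
  shows "walk G (rev p)"
  unfolding walk_def
proof (intro conjI allI impI)
  show "rev p \<noteq> []" "set (rev p) \<subseteq> verts G" using assms(2) by (auto simp: walk_def)
  fix i assume i: "Suc i < length (rev p)"
  let ?n = "length p"
  have "Suc (?n - Suc (Suc i)) < ?n" using i by simp
  then have "(p ! (?n - Suc (Suc i)), p ! Suc (?n - Suc (Suc i))) \<in> edges G"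
    using assms(2) unfolding walk_def by blast
  moreover have "Suc (?n - Suc (Suc i)) = ?n - Suc i" using i by simp
  ultimately have "(p ! (?n - Suc (Suc i)), p ! (?n - Suc i)) \<in> edges G" by simp
  then show "(rev p ! i, rev p ! Suc i) \<in> edges G"
    using assms(1) i unfolding graph_def by (simp add: rev_nth symD)
qed

lemma walk_take: "walk G p \<Longrightarrow> 0 < n \<Longrightarrow> walk G (take n p)"
  unfolding walk_def by (auto dest: in_set_takeD)

lemma walk_drop: "walk G p \<Longrightarrow> n < length p \<Longrightarrow> walk G (drop n p)"
  unfolding walk_def by (auto dest: in_set_dropD)

lemma walk_crosses:
  assumes "walk G p" "P (hd p)" "\<not> P (last p)"
  shows "\<exists>u v. (u, v) \<in> edges G \<and> P u \<and> \<not> P v"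
  using assms
proof (induction p)
  case Nil then show ?case by (simp add: walk_def)
next
  case (Cons x p)
  show ?case
  proof (cases p)
    case Nil then show ?thesis using Cons.prems by simp
  next
    case (Cons y q)
    then have "walk G p" "(x, y) \<in> edges G" using Cons.prems by (auto simp: walk_Cons)
    then show ?thesis using Cons.IH Cons.prems \<open>p = y # q\<close> by (cases "P y") auto
  qed
qed

lemma reach_refl: "x \<in> verts G \<Longrightarrow> reach G x x"
  unfolding reach_def by (rule exI[of _ "[x]"]) (simp add: walk_def)

lemma reach_trans: "reach G x y \<Longrightarrow> reach G y z \<Longrightarrow> reach G x z"
  unfolding reach_def
proof (elim exE conjE)
  fix p q assume "walk G p" "hd p = x" "last p = y" "walk G q" "hd q = y" "last q = z"
  then show "\<exists>p. walk G p \<and> hd p = x \<and> last p = z"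
    using walk_nonempty[of G p] walk_nonempty[of G q]
    by (intro exI[of _ "p @ tl q"]) (auto simp: walk_append last_append_tl)
qed

lemma reach_sym: "graph G \<Longrightarrow> reach G x y \<Longrightarrow> reach G y x"
  unfolding reach_def by (metis walk_rev walk_nonempty hd_rev last_rev)

lemma reach_verts: "reach G x y \<Longrightarrow> x \<in> verts G \<and> y \<in> verts G"
  unfolding reach_def using walk_hd walk_last by blast

lemma reach_edge: "graph G \<Longrightarrow> (x, y) \<in> edges G \<Longrightarrow> reach G x y"
  unfolding reach_def graph_def
  by (rule exI[of _ "[x, y]"]) (auto simp: walk_def less_Suc_eq)

lemma connected_reach: "connected_graph G \<Longrightarrow> x \<in> verts G \<Longrightarrow> y \<in> verts G \<Longrightarrow> reach G x y"
  unfolding connected_graph_def reach_def by blast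

lemma dist_witness:
  assumes "reach G x y"
  obtains p where "walk G p" "hd p = x" "last p = y" "length p = Suc (dist G x y)"
proof -
  obtain p where p: "walk G p" "hd p = x" "last p = y" using assms unfolding reach_def by blast
  then have "\<exists>n p. walk G p \<and> hd p = x \<and> last p = y \<and> length p = Suc n"
    using walk_nonempty[OF p(1)] by (intro exI[of _ "length p - 1"] exI[of _ p]) auto
  then have "\<exists>p. walk G p \<and> hd p = x \<and> last p = y \<and> length p = Suc (dist G x y)"
    unfolding dist_def by (rule LeastI_ex)
  then show ?thesis using that by blast
qed

lemma dist_le_walk:
  assumes "walk G p" "hd p = x" "last p = y"
  shows "dist G x y \<le> length p - 1"
proof -
  have "length p = Suc (length p - 1)" using walk_nonempty[OF assms(1)] by simp
  then show ?thesis unfolding dist_def using assms by (intro Least_le) blast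
qed

lemma dist_self: "x \<in> verts G \<Longrightarrow> dist G x x = 0"
  using dist_le_walk[of G "[x]" x x] by (simp add: walk_def)

lemma dist_eq_0_imp_eq:
  assumes "reach G x y" "dist G x y = 0" shows "x = y"
proof -
  obtain p where "walk G p" "hd p = x" "last p = y" "length p = Suc 0"
    using dist_witness[OF assms(1)] assms(2) by auto
  then show ?thesis by (cases p) auto
qed

lemma dist_sym_le:
  assumes "graph G" "reach G x y" shows "dist G y x \<le> dist G x y"
proof -
  obtain p where p: "walk G p" "hd p = x" "last p = y" "length p = Suc (dist G x y)"
    using dist_witness[OF assms(2)] by blast
  then have "walk G (rev p)" "hd (rev p) = y" "last (rev p) = x"
    using walk_rev[OF assms(1)] walk_nonempty by (auto simp: hd_rev last_rev)
  then show ?thesis using dist_le_walk[of G "rev p" y x] p by simp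
qed

lemma dist_sym: "graph G \<Longrightarrow> reach G x y \<Longrightarrow> dist G x y = dist G y x"
  using dist_sym_le reach_sym by (metis le_antisym)

lemma dist_triangle:
  assumes "reach G x y" "reach G y z"
  shows "dist G x z \<le> dist G x y + dist G y z"
proof -
  obtain p where p: "walk G p" "hd p = x" "last p = y" "length p = Suc (dist G x y)"
    using dist_witness[OF assms(1)] by blast
  obtain q where q: "walk G q" "hd q = y" "last q = z" "length q = Suc (dist G y z)"
    using dist_witness[OF assms(2)] by blast
  have "walk G (p @ tl q)" "hd (p @ tl q) = x" "last (p @ tl q) = z"
    using p q walk_append[OF p(1) q(1)] walk_nonempty[OF p(1)] walk_nonempty[OF q(1)]
    by (auto simp: last_append_tl)
  then have "dist G x z \<le> length (p @ tl q) - 1" by (rule dist_le_walk)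
  then show ?thesis using p q by simp
qed

lemma dist_edge:
  assumes "graph G" "(x, y) \<in> edges G" shows "dist G x y = 1"
proof -
  have "walk G [x, y]" using assms unfolding graph_def walk_def by (auto simp: less_Suc_eq)
  then have "dist G x y \<le> 1" using dist_le_walk[of G "[x,y]" x y] by simp
  moreover have "x \<noteq> y" using assms unfolding graph_def irrefl_def by auto
  then have "dist G x y \<noteq> 0" using dist_eq_0_imp_eq reach_edge assms by metis
  ultimately show ?thesis by simp
qed

lemma edge_if_dist_1:
  assumes "reach G x y" "dist G x y = 1" shows "(x, y) \<in> edges G"
proof -
  obtain p where p: "walk G p" "hd p = x" "last p = y" "length p = Suc (dist G x y)"
    using dist_witness[OF assms(1)] by blast
  then obtain a b where "p = [a, b]" using assms(2) by (cases p; cases "tl p") auto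
  then show ?thesis using p unfolding walk_def by auto
qed

lemma walk_potential:
  assumes "walk G p" "\<And>u v. (u, v) \<in> edges G \<Longrightarrow> f u \<le> f v + (1::nat)"
  shows "f (hd p) \<le> f (last p) + (length p - 1)"
  using assms(1)
proof (induction p)
  case Nil then show ?case by (simp add: walk_def)
next
  case (Cons x p)
  show ?case
  proof (cases p)
    case Nil then show ?thesis by simp
  next
    case (Cons y q)
    then have "walk G p" "(x, y) \<in> edges G" using Cons.prems by (auto simp: walk_Cons)
    then have "f (hd p) \<le> f (last p) + (length p - 1)" "f x \<le> f y + 1"
      using Cons.IH assms(2) by auto
    then show ?thesis using \<open>p = y # q\<close> by simp
  qed
qed

lemma dist_potential:
  assumes "reach G x y" "\<And>u v. (u, v) \<in> edges G \<Longrightarrow> f u \<le> f v + (1::nat)"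
  shows "f x \<le> f y + dist G x y"
proof -
  obtain p where p: "walk G p" "hd p = x" "last p = y" "length p = Suc (dist G x y)"
    using dist_witness[OF assms(1)] by blast
  then show ?thesis using walk_potential[OF p(1) assms(2)] by simp
qed

lemma interval_iff_dist:
  assumes "reach G x y"
  shows "z \<in> interval G x y \<longleftrightarrow> reach G x z \<and> reach G z y \<and> dist G x z + dist G z y = dist G x y"
proof
  assume "z \<in> interval G x y"
  then obtain p where p: "walk G p" "hd p = x" "last p = y" "length p = Suc (dist G x y)" "z \<in> set p"
    unfolding interval_def by blast
  then obtain i where i: "i < length p" "p ! i = z" by (auto simp: in_set_conv_nth)
  let ?p1 = "take (Suc i) p" and ?p2 = "drop i p"
  have w1: "walk G ?p1" "hd ?p1 = x" "last ?p1 = z"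
    using walk_take[OF p(1), of "Suc i"] p(2) i walk_nonempty[OF p(1)]
    by (simp, cases p, simp_all add: take_Suc_conv_app_nth[OF i(1)])
  have w2: "walk G ?p2" "hd ?p2 = z" "last ?p2 = y"
    using walk_drop[OF p(1)] p i by (auto simp: hd_drop_conv_nth)
  have r: "reach G x z" "reach G z y" using w1 w2 unfolding reach_def by blast+
  have "dist G x z \<le> i" using dist_le_walk[OF w1] i by simp
  moreover have "dist G z y \<le> length p - 1 - i" using dist_le_walk[OF w2] i by simp
  moreover have "dist G x y \<le> dist G x z + dist G z y" by (rule dist_triangle[OF r])
  ultimately show "reach G x z \<and> reach G z y \<and> dist G x z + dist G z y = dist G x y"
    using p(4) i(1) r by linarith
next
  assume h: "reach G x z \<and> reach G z y \<and> dist G x z + dist G z y = dist G x y"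
  obtain p where p: "walk G p" "hd p = x" "last p = z" "length p = Suc (dist G x z)"
    using dist_witness[of G x z] h by blast
  obtain q where q: "walk G q" "hd q = z" "last q = y" "length q = Suc (dist G z y)"
    using dist_witness[of G z y] h by blast
  have ne: "p \<noteq> []" "q \<noteq> []" using p q walk_nonempty by auto
  have "walk G (p @ tl q)" "hd (p @ tl q) = x" "last (p @ tl q) = y"
    using p q ne walk_append[OF p(1) q(1)] by (auto simp: last_append_tl)
  moreover have "length (p @ tl q) = Suc (dist G x y)" using p(4) q(4) h ne by simp
  moreover have "z \<in> set (p @ tl q)" using p ne by (auto intro: last_in_set)
  ultimately show "z \<in> interval G x y" unfolding interval_def by blast
qed

lemma interval_verts: "interval G x y \<subseteq> verts G"
  unfolding interval_def by (auto simp: walk_def)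

lemma geodesic_subset_interval:
  "walk G p \<Longrightarrow> hd p = x \<Longrightarrow> last p = y \<Longrightarrow> length p = Suc (dist G x y) \<Longrightarrow> set p \<subseteq> interval G x y"
  unfolding interval_def by blast

lemma interval_iff_dist_connected:
  assumes "connected_graph G" "x \<in> verts G" "y \<in> verts G"
  shows "z \<in> interval G x y \<longleftrightarrow> z \<in> verts G \<and> dist G x z + dist G z y = dist G x y"
proof -
  have "z \<in> verts G \<Longrightarrow> reach G x z \<and> reach G z y"
    using connected_reach[OF assms(1)] assms(2,3) by blast
  then show ?thesis
    using interval_iff_dist[OF connected_reach[OF assms]] interval_verts[of G x y] by blast
qed

lemma ends_in_interval:
  assumes "reach G x y" shows "x \<in> interval G x y" "y \<in> interval G x y"
proof -
  have v: "x \<in> verts G" "y \<in> verts G" using reach_verts[OF assms] by auto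
  show "x \<in> interval G x y" "y \<in> interval G x y"
    unfolding interval_iff_dist[OF assms]
    using assms reach_refl[OF v(1)] reach_refl[OF v(2)] dist_self[OF v(1)] dist_self[OF v(2)] by simp_all
qed

lemma interval_sym:
  assumes "graph G" "reach G x y" shows "interval G x y = interval G y x"
proof -
  have sub: "interval G u v \<subseteq> interval G v u" if r: "reach G u v" for u v
  proof
    fix z assume "z \<in> interval G u v"
    then have a: "reach G u z" "reach G z v" "dist G u z + dist G z v = dist G u v"
      using interval_iff_dist[OF r] by auto
    moreover have "dist G v z = dist G z v" "dist G z u = dist G u z" "dist G v u = dist G u v"
      using dist_sym[OF assms(1)] a r by metis+
    ultimately show "z \<in> interval G v u"
      unfolding interval_iff_dist[OF reach_sym[OF assms(1) r]] using reach_sym[OF assms(1)] by auto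
  qed
  show ?thesis using sub[OF assms(2)] sub[OF reach_sym[OF assms]] by blast
qed

lemma interval_self: assumes "x \<in> verts G" shows "interval G x x = {x}"
proof -
  have r: "reach G x x" using reach_refl[OF assms] .
  have "z = x" if "z \<in> interval G x x" for z
    using that dist_eq_0_imp_eq[of G x z] dist_self[OF assms] unfolding interval_iff_dist[OF r] by simp
  then show ?thesis using ends_in_interval[OF r] by blast
qed

lemma interval_subset_interval:
  assumes c: "connected_graph G" and xz: "x \<in> verts G" "z \<in> verts G"
    and y: "y \<in> interval G x z"
  shows "interval G y z \<subseteq> interval G x z"
proof
  fix w assume w: "w \<in> interval G y z"
  have yv: "y \<in> verts G" using y interval_verts[of G] by blast
  have e1: "dist G x y + dist G y z = dist G x z"
    using y interval_iff_dist_connected[OF c xz] by blast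
  have wv: "w \<in> verts G" and e2: "dist G y w + dist G w z = dist G y z"
    using w interval_iff_dist_connected[OF c yv xz(2)] by auto
  have "dist G x w \<le> dist G x y + dist G y w"
    by (rule dist_triangle[OF connected_reach[OF c xz(1) yv] connected_reach[OF c yv wv]])
  moreover have "dist G x z \<le> dist G x w + dist G w z"
    by (rule dist_triangle[OF connected_reach[OF c xz(1) wv] connected_reach[OF c wv xz(2)]])
  ultimately show "w \<in> interval G x z"
    using e1 e2 interval_iff_dist_connected[OF c xz] wv by auto
qed

lemma convex_verts: "convex G (verts G)"
  unfolding convex_def using interval_verts[of G] by blast

lemma convex_Int: "convex G A \<Longrightarrow> convex G B \<Longrightarrow> convex G (A \<inter> B)"
  unfolding convex_def by blast

lemma convex_singleton: "x \<in> verts G \<Longrightarrow> convex G {x}"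
  unfolding convex_def using interval_self[of x G] by simp

lemma convex_Inter: "S \<noteq> {} \<Longrightarrow> (\<And>A. A \<in> S \<Longrightarrow> convex G A) \<Longrightarrow> convex G (\<Inter> S)"
  unfolding convex_def by blast

lemma convex_convex_hull: "S \<subseteq> verts G \<Longrightarrow> convex G (convex_hull G S)"
  unfolding convex_hull_def by (rule convex_Inter) (use convex_verts[of G] in auto)

lemma convex_hull_subset: "S \<subseteq> convex_hull G S"
  unfolding convex_hull_def by blast

lemma convex_hull_minimal: "convex G C \<Longrightarrow> S \<subseteq> C \<Longrightarrow> convex_hull G S \<subseteq> C"
  unfolding convex_hull_def by blast

lemma interval_set_mono: "S \<subseteq> T \<Longrightarrow> interval_set G S \<subseteq> interval_set G T"
  unfolding interval_set_def by blast

lemma interval_set_verts: "interval_set G S \<subseteq> verts G"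
  unfolding interval_set_def using interval_verts[of G] by blast

lemma subset_interval_set:
  assumes "S \<subseteq> verts G" shows "S \<subseteq> interval_set G S"
proof
  fix x assume x: "x \<in> S"
  then have "x \<in> interval G x x" using interval_self[of x G] assms by blast
  then show "x \<in> interval_set G S" unfolding interval_set_def using x by blast
qed

lemma interval_set_subset_convex: "convex G C \<Longrightarrow> S \<subseteq> C \<Longrightarrow> interval_set G S \<subseteq> C"
  unfolding interval_set_def convex_def by blast

lemma interval_set_convex_eq:
  assumes "convex G C" shows "interval_set G C = C"
proof -
  have "C \<subseteq> verts G" using assms unfolding convex_def by blast
  then show ?thesis using interval_set_subset_convex[OF assms subset_refl] subset_interval_set by blast
qed

lemma interval_set_singleton: "x \<in> verts G \<Longrightarrow> interval_set G {x} = {x}"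
  using interval_set_convex_eq[OF convex_singleton] .

lemma interval_set_insert_convex:
  assumes G: "graph G" "connected_graph G" and K: "convex G K" "K \<noteq> {}" and x: "x \<in> verts G"
  shows "interval_set G (insert x K) = K \<union> (\<Union>t\<in>K. interval G x t)"
proof
  have KV: "K \<subseteq> verts G" using K unfolding convex_def by blast
  show "interval_set G (insert x K) \<subseteq> K \<union> (\<Union>t\<in>K. interval G x t)"
  proof
    fix z assume "z \<in> interval_set G (insert x K)"
    then obtain s t where st: "s \<in> insert x K" "t \<in> insert x K" "z \<in> interval G s t"
      unfolding interval_set_def by blast
    obtain k where k: "k \<in> K" using K(2) by blast
    consider "s = x" "t = x" | "s = x" "t \<in> K" | "s \<in> K" "t = x" | "s \<in> K" "t \<in> K"
      using st by blast
    then show "z \<in> K \<union> (\<Union>t\<in>K. interval G x t)"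
    proof cases
      case 1
      then show ?thesis using st interval_self[OF x] ends_in_interval(1)[of G x k] k KV
        connected_reach[OF G(2) x] by auto
    next
      case 2
      then show ?thesis using st by blast
    next
      case 3
      then show ?thesis using st interval_sym[OF G(1) connected_reach[OF G(2)]] x KV by blast
    next
      case 4
      then show ?thesis using st K(1) unfolding convex_def by blast
    qed
  qed
  have "K \<subseteq> interval_set G (insert x K)"
    using subset_interval_set[of "insert x K" G] KV x by blast
  moreover have "interval G x t \<subseteq> interval_set G (insert x K)" if "t \<in> K" for t
    using that unfolding interval_set_def by blast
  ultimately show "K \<union> (\<Union>t\<in>K. interval G x t) \<subseteq> interval_set G (insert x K)" by blast
qed

definition ph_le_1 :: "'a graph \<Rightarrow> bool" where
  "ph_le_1 G \<longleftrightarrow> (\<forall>x\<in>verts G. \<forall>C. copoint G x C \<longrightarrow> convex G (interval_set G (insert x C)))"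

lemma copoint_verts: "copoint G x C \<Longrightarrow> C \<subseteq> verts G"
  unfolding copoint_def convex_def by blast

lemma ph_at_most_1_iff: "ph_at_most G 1 \<longleftrightarrow> ph_le_1 G"
proof
  assume "ph_at_most G 1"
  then obtain n where n: "n \<le> 1" "ph_property G n" unfolding ph_at_most_def by blast
  show "ph_le_1 G" unfolding ph_le_1_def
  proof (intro ballI allI impI)
    fix x C assume x: "x \<in> verts G" and c: "copoint G x C"
    let ?S = "insert x C"
    have S: "?S \<subseteq> verts G" using x copoint_verts[OF c] by blast
    have h: "convex_hull G ?S = (interval_set G ^^ n) ?S" using n(2) x c unfolding ph_property_def by blast
    show "convex G (interval_set G ?S)"
    proof (cases "n = 0")
      case True
      then have "convex G ?S" using h convex_convex_hull[OF S] by simp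
      then show ?thesis using interval_set_convex_eq[of G ?S] by simp
    next
      case False
      then show ?thesis using n h convex_convex_hull[OF S] by (simp add: le_Suc_eq)
    qed
  qed
next
  assume p: "ph_le_1 G"
  have "ph_property G 1" unfolding ph_property_def
  proof (intro ballI allI impI)
    fix x C assume x: "x \<in> verts G" and c: "copoint G x C"
    let ?S = "insert x C"
    have S: "?S \<subseteq> verts G" using x copoint_verts[OF c] by blast
    have "convex G (interval_set G ?S)" using p x c unfolding ph_le_1_def by blast
    then have "convex_hull G ?S \<subseteq> interval_set G ?S"
      using convex_hull_minimal subset_interval_set[OF S] by blast
    moreover have "interval_set G ?S \<subseteq> convex_hull G ?S"
      using interval_set_subset_convex[OF convex_convex_hull[OF S] convex_hull_subset] .
    ultimately show "convex_hull G ?S = (interval_set G ^^ 1) ?S" by simp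
  qed
  then show "ph_at_most G 1" unfolding ph_at_most_def by blast
qed

lemma ph_homogeneous_iff: "ph_homogeneous G \<longleftrightarrow> (\<forall>A. finite A \<and> convex G A \<longrightarrow> ph_le_1 (induced G A))"
  unfolding ph_homogeneous_def ph_at_most_1_iff ..

lemma verts_induced [simp]: "verts (induced G A) = A"
  by (simp add: induced_def verts_def)

lemma edges_induced [simp]: "edges (induced G A) = edges G \<inter> (A \<times> A)"
  by (simp add: induced_def edges_def)

lemma graph_induced: "graph G \<Longrightarrow> graph (induced G A)"
  unfolding graph_def by (auto simp: sym_def irrefl_def)

lemma induced_induced: "B \<subseteq> A \<Longrightarrow> induced (induced G A) B = induced G B"
  unfolding induced_def edges_def by auto

lemma induced_verts: "graph G \<Longrightarrow> induced G (verts G) = G"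
proof -
  assume "graph G"
  then have "edges G \<inter> (verts G \<times> verts G) = edges G" unfolding graph_def by blast
  then show ?thesis unfolding induced_def by (simp add: verts_def edges_def)
qed

lemma walk_induced_iff:
  assumes "A \<subseteq> verts G"
  shows "walk (induced G A) p \<longleftrightarrow> walk G p \<and> set p \<subseteq> A"
proof
  assume "walk (induced G A) p" then show "walk G p \<and> set p \<subseteq> A"
    using assms unfolding walk_def by auto
next
  assume h: "walk G p \<and> set p \<subseteq> A"
  show "walk (induced G A) p" unfolding walk_def
  proof (intro conjI allI impI)
    show "p \<noteq> []" "set p \<subseteq> verts (induced G A)" using h by (auto simp: walk_def)
    fix i assume i: "Suc i < length p"
    then have "p ! i \<in> A" "p ! Suc i \<in> A" using h nth_mem[of i p] nth_mem[of "Suc i" p] by auto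
    moreover have "(p ! i, p ! Suc i) \<in> edges G" using h i by (auto simp: walk_def)
    ultimately show "(p ! i, p ! Suc i) \<in> edges (induced G A)" by simp
  qed
qed

lemma reach_induced_convex:
  assumes A: "convex G A" and xy: "x \<in> A" "y \<in> A" and r: "reach G x y"
  shows "reach (induced G A) x y \<and> dist (induced G A) x y = dist G x y"
proof -
  obtain p where p: "walk G p" "hd p = x" "last p = y" "length p = Suc (dist G x y)"
    using dist_witness[OF r] by blast
  have AV: "A \<subseteq> verts G" using A unfolding convex_def by blast
  have "set p \<subseteq> A" using geodesic_subset_interval[OF p] A xy unfolding convex_def by blast
  then have w: "walk (induced G A) p" using p(1) walk_induced_iff[OF AV] by blast
  then have r': "reach (induced G A) x y" using p unfolding reach_def by blast
  have "dist (induced G A) x y \<le> dist G x y" using dist_le_walk[OF w p(2,3)] p(4) by simp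
  moreover obtain q where q: "walk (induced G A) q" "hd q = x" "last q = y"
      "length q = Suc (dist (induced G A) x y)"
    using dist_witness[OF r'] by blast
  have "walk G q" using q(1) walk_induced_iff[OF AV] by blast
  then have "dist G x y \<le> dist (induced G A) x y"
    using dist_le_walk[OF _ q(2,3)] q(4) by simp
  ultimately show ?thesis using r' by simp
qed

lemma connected_induced_convex:
  assumes c: "connected_graph G" and A: "convex G A" "A \<noteq> {}"
  shows "connected_graph (induced G A)"
  unfolding connected_graph_def
proof (intro conjI ballI)
  show "verts (induced G A) \<noteq> {}" using A by simp
  fix x y assume "x \<in> verts (induced G A)" "y \<in> verts (induced G A)"
  then have xy: "x \<in> A" "y \<in> A" by auto
  have "reach G x y" using connected_reach[OF c] xy A unfolding convex_def by auto
  then have "reach (induced G A) x y" using reach_induced_convex[OF A(1) xy] by blast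
  then show "\<exists>p. walk (induced G A) p \<and> hd p = x \<and> last p = y" unfolding reach_def .
qed

locale convex_subgraph =
  fixes G :: "'a graph" and A :: "'a set"
  assumes convex: "convex G A" and reach_within: "\<And>x y. x \<in> A \<Longrightarrow> y \<in> A \<Longrightarrow> reach G x y"
begin

lemma subset_verts: "A \<subseteq> verts G"
  using convex unfolding convex_def by blast

lemma reach_induced: "x \<in> A \<Longrightarrow> y \<in> A \<Longrightarrow> reach (induced G A) x y"
  using reach_induced_convex[OF convex _ _ reach_within] by blast

lemma dist_induced: "x \<in> A \<Longrightarrow> y \<in> A \<Longrightarrow> dist (induced G A) x y = dist G x y"
  using reach_induced_convex[OF convex _ _ reach_within] by blast

lemma interval_induced:
  assumes xy: "x \<in> A" "y \<in> A"
  shows "interval (induced G A) x y = interval G x y"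
proof -
  have r: "reach G x y" using reach_within xy .
  have i: "interval G x y \<subseteq> A" using convex xy unfolding convex_def by blast
  have "z \<in> interval (induced G A) x y \<longleftrightarrow> z \<in> A \<and> dist G x z + dist G z y = dist G x y"
    for z
  proof -
    have "reach (induced G A) x z \<Longrightarrow> z \<in> A" using reach_verts by fastforce
    then show ?thesis
      unfolding interval_iff_dist[OF reach_induced[OF xy]]
      using reach_induced dist_induced xy by auto
  qed
  moreover have "z \<in> interval G x y \<longleftrightarrow> z \<in> A \<and> dist G x z + dist G z y = dist G x y" for z
  proof -
    have "z \<in> A \<Longrightarrow> reach G x z \<and> reach G z y"
      using reach_within xy by blast
    then show ?thesis unfolding interval_iff_dist[OF r] using i interval_iff_dist[OF r] by blast
  qed
  ultimately show ?thesis by blast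
qed

lemma convex_induced_iff: "convex (induced G A) B \<longleftrightarrow> B \<subseteq> A \<and> convex G B"
proof
  assume h: "convex (induced G A) B"
  then have B: "B \<subseteq> A" unfolding convex_def by simp
  have "\<forall>x\<in>B. \<forall>y\<in>B. interval G x y \<subseteq> B"
    using h B interval_induced unfolding convex_def by (metis subsetD)
  then show "B \<subseteq> A \<and> convex G B" using B subset_verts unfolding convex_def by blast
next
  assume h: "B \<subseteq> A \<and> convex G B"
  have "\<forall>x\<in>B. \<forall>y\<in>B. interval (induced G A) x y \<subseteq> B"
    using h interval_induced unfolding convex_def by (metis subsetD)
  then show "convex (induced G A) B" using h unfolding convex_def by simp
qed

lemma interval_set_induced: "S \<subseteq> A \<Longrightarrow> interval_set (induced G A) S = interval_set G S"
proof -
  assume S: "S \<subseteq> A"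
  then have "\<And>x y. x \<in> S \<Longrightarrow> y \<in> S \<Longrightarrow> interval (induced G A) x y = interval G x y"
    using interval_induced by blast
  then show ?thesis unfolding interval_set_def by simp
qed

lemma copoint_induced_iff:
  "copoint (induced G A) x C \<longleftrightarrow> C \<subseteq> A \<and> convex G C \<and> x \<notin> C \<and>
     (\<forall>D. D \<subseteq> A \<and> convex G D \<and> C \<subseteq> D \<and> x \<notin> D \<longrightarrow> D = C)"
  unfolding copoint_def convex_induced_iff by meson

lemma ph_le_1_induced_iff:
  "ph_le_1 (induced G A) \<longleftrightarrow>
    (\<forall>x\<in>A. \<forall>C. copoint (induced G A) x C \<longrightarrow> convex G (interval_set G (insert x C)))"
proof -
  have "convex (induced G A) (interval_set (induced G A) (insert x C)) \<longleftrightarrow>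
      convex G (interval_set G (insert x C))"
    if "x \<in> A" "copoint (induced G A) x C" for x C
  proof -
    have S: "insert x C \<subseteq> A" using that copoint_induced_iff by blast
    show ?thesis
      using interval_set_induced[OF S] interval_set_subset_convex[OF convex S] convex_induced_iff
      by simp
  qed
  then show ?thesis unfolding ph_le_1_def by auto
qed

end

lemma convex_subgraphI:
  assumes "connected_graph G" "convex G A" shows "convex_subgraph G A"
proof
  show "convex G A" by fact
  fix x y assume "x \<in> A" "y \<in> A"
  then show "reach G x y" using connected_reach[OF assms(1)] assms(2) unfolding convex_def by blast
qed

lemma ph_homogeneous_induced_convex:
  assumes "connected_graph G" "convex G A" "ph_homogeneous G"
  shows "ph_homogeneous (induced G A)"
proof -
  interpret convex_subgraph G A using convex_subgraphI assms by blast
  show ?thesis unfolding ph_homogeneous_def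
  proof (intro allI impI)
    fix B assume B: "finite B \<and> convex (induced G A) B"
    then have "B \<subseteq> A" "convex G B" using convex_induced_iff by auto
    then have "ph_at_most (induced G B) 1" using assms(3) B unfolding ph_homogeneous_def by blast
    then show "ph_at_most (induced (induced G A) B) 1" using induced_induced[OF \<open>B \<subseteq> A\<close>] by simp
  qed
qed

definition graph_iso_map :: "'a graph \<Rightarrow> 'b graph \<Rightarrow> ('a \<Rightarrow> 'b) \<Rightarrow> bool" where
  "graph_iso_map G H f \<longleftrightarrow> bij_betw f (verts G) (verts H) \<and>
     (\<forall>u\<in>verts G. \<forall>v\<in>verts G. (u, v) \<in> edges G \<longleftrightarrow> (f u, f v) \<in> edges H)"

lemma graph_iso_iff_map: "graph_iso G H \<longleftrightarrow> (\<exists>f. graph_iso_map G H f)"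
  unfolding graph_iso_def graph_iso_map_def by blast

lemma graph_iso_map_inv:
  assumes "graph_iso_map G H f" shows "graph_iso_map H G (inv_into (verts G) f)"
proof -
  have b: "bij_betw f (verts G) (verts H)" using assms unfolding graph_iso_map_def by blast
  let ?g = "inv_into (verts G) f"
  have "(u, v) \<in> edges H \<longleftrightarrow> (?g u, ?g v) \<in> edges G" if uv: "u \<in> verts H" "v \<in> verts H" for u v
  proof -
    have "?g u \<in> verts G" "f (?g u) = u" "?g v \<in> verts G" "f (?g v) = v"
      using b uv by (auto simp: bij_betw_def inv_into_into f_inv_into_f)
    then show ?thesis using assms unfolding graph_iso_map_def by metis
  qed
  then show ?thesis using bij_betw_inv_into[OF b] unfolding graph_iso_map_def by blast
qed

lemma graph_iso_map_induced:
  assumes "graph_iso_map G H f" "A \<subseteq> verts G"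
  shows "graph_iso_map (induced G A) (induced H (f ` A)) f"
proof -
  have b: "bij_betw f (verts G) (verts H)" using assms unfolding graph_iso_map_def by blast
  have "bij_betw f A (f ` A)" using bij_betw_subset[OF b assms(2)] by (simp add: bij_betw_def)
  then show ?thesis using assms unfolding graph_iso_map_def by auto
qed

lemma walk_iso_map:
  assumes "graph_iso_map G H f" "walk G p" shows "walk H (map f p)"
  unfolding walk_def
proof (intro conjI allI impI)
  show "map f p \<noteq> []" using assms(2) by (simp add: walk_def)
  have "bij_betw f (verts G) (verts H)" using assms(1) unfolding graph_iso_map_def by blast
  then show "set (map f p) \<subseteq> verts H" using assms(2) by (auto simp: walk_def bij_betw_def)
  fix i assume i: "Suc i < length (map f p)"
  then have "(p ! i, p ! Suc i) \<in> edges G" "p ! i \<in> verts G" "p ! Suc i \<in> verts G"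
    using assms(2) nth_mem[of i p] nth_mem[of "Suc i" p] unfolding walk_def by auto
  then show "(map f p ! i, map f p ! Suc i) \<in> edges H"
    using assms(1) i unfolding graph_iso_map_def by simp
qed

lemma reach_iso_map:
  assumes "graph_iso_map G H f" "reach G u v"
  shows "reach H (f u) (f v)"
proof -
  obtain p where p: "walk G p" "hd p = u" "last p = v" using assms(2) unfolding reach_def by blast
  then show ?thesis unfolding reach_def using walk_iso_map[OF assms(1) p(1)] walk_nonempty[OF p(1)]
    by (intro exI[of _ "map f p"]) (simp add: hd_map last_map)
qed

lemma dist_iso_map_le:
  assumes "graph_iso_map G H f" "reach G u v"
  shows "dist H (f u) (f v) \<le> dist G u v"
proof -
  obtain p where p: "walk G p" "hd p = u" "last p = v" "length p = Suc (dist G u v)"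
    using dist_witness[OF assms(2)] by blast
  then have "walk H (map f p)" "hd (map f p) = f u" "last (map f p) = f v"
    using walk_iso_map[OF assms(1) p(1)] walk_nonempty[OF p(1)] by (auto simp: hd_map last_map)
  then show ?thesis using dist_le_walk[of H "map f p" "f u" "f v"] p by simp
qed

locale graph_isomorphism =
  fixes G :: "'a graph" and H :: "'b graph" and f :: "'a \<Rightarrow> 'b"
  assumes iso: "graph_iso_map G H f" and connected: "connected_graph G"
begin

abbreviation "f_inv \<equiv> inv_into (verts G) f"

lemma bij: "bij_betw f (verts G) (verts H)"
  using iso unfolding graph_iso_map_def by blast

lemma map_verts: "x \<in> verts G \<Longrightarrow> f x \<in> verts H"
  using bij by (auto simp: bij_betw_def)

lemma inv_map_verts: "y \<in> verts H \<Longrightarrow> f_inv y \<in> verts G \<and> f (f_inv y) = y"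
  using bij by (auto simp: bij_betw_def inv_into_into f_inv_into_f)

lemma inv_map_map: "x \<in> verts G \<Longrightarrow> f_inv (f x) = x"
  using bij by (simp add: bij_betw_def)

lemma connected_target: "connected_graph H"
  unfolding connected_graph_def
proof (intro conjI ballI)
  show "verts H \<noteq> {}" using connected bij unfolding connected_graph_def bij_betw_def by auto
  fix x y assume "x \<in> verts H" "y \<in> verts H"
  then have "reach H (f (f_inv x)) (f (f_inv y))"
    using reach_iso_map[OF iso connected_reach[OF connected]] inv_map_verts by blast
  then show "\<exists>p. walk H p \<and> hd p = x \<and> last p = y"
    unfolding reach_def using inv_map_verts \<open>x \<in> verts H\<close> \<open>y \<in> verts H\<close> by simp
qed

lemma dist_map: assumes "x \<in> verts G" "y \<in> verts G" shows "dist H (f x) (f y) = dist G x y"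
proof -
  have r: "reach G x y" using connected_reach[OF connected assms] .
  have "dist G (f_inv (f x)) (f_inv (f y)) \<le> dist H (f x) (f y)"
    using dist_iso_map_le[OF graph_iso_map_inv[OF iso] reach_iso_map[OF iso r]] .
  then show ?thesis using dist_iso_map_le[OF iso r] inv_map_map assms by simp
qed

lemma map_mem_interval_iff:
  assumes "x \<in> verts G" "y \<in> verts G" "w \<in> verts G"
  shows "f w \<in> interval H (f x) (f y) \<longleftrightarrow> w \<in> interval G x y"
  unfolding interval_iff_dist_connected[OF connected assms(1,2)]
    interval_iff_dist_connected[OF connected_target map_verts[OF assms(1)] map_verts[OF assms(2)]]
  using assms dist_map map_verts by simp

lemma interval_image:
  assumes "x \<in> verts G" "y \<in> verts G"
  shows "interval H (f x) (f y) = f ` interval G x y"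
proof
  show "interval H (f x) (f y) \<subseteq> f ` interval G x y"
  proof
    fix z assume z: "z \<in> interval H (f x) (f y)"
    then have "z \<in> verts H" using interval_verts[of H] by blast
    then have fz: "f_inv z \<in> verts G" "f (f_inv z) = z" using inv_map_verts by auto
    then have "f_inv z \<in> interval G x y" using map_mem_interval_iff[OF assms fz(1)] z by simp
    then show "z \<in> f ` interval G x y" using fz(2) by (rule rev_image_eqI[OF _ sym])
  qed
  show "f ` interval G x y \<subseteq> interval H (f x) (f y)"
    using map_mem_interval_iff[OF assms] interval_verts[of G x y] by blast
qed

lemma interval_set_image:
  assumes "S \<subseteq> verts G" shows "interval_set H (f ` S) = f ` interval_set G S"
proof -
  have "interval_set H (f ` S) = (\<Union>x\<in>S. \<Union>y\<in>S. interval H (f x) (f y))"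
    unfolding interval_set_def by simp
  also have "\<dots> = (\<Union>x\<in>S. \<Union>y\<in>S. f ` interval G x y)"
    using interval_image assms by (intro SUP_cong refl) blast
  also have "\<dots> = f ` interval_set G S" unfolding interval_set_def by (simp add: image_UN)
  finally show ?thesis .
qed

lemma map_mem_image_iff: "S \<subseteq> verts G \<Longrightarrow> w \<in> verts G \<Longrightarrow> f w \<in> f ` S \<longleftrightarrow> w \<in> S"
  using bij unfolding bij_betw_def inj_on_def by blast

lemma image_preimage: "T \<subseteq> verts H \<Longrightarrow> f ` {v \<in> verts G. f v \<in> T} = T"
proof
  assume T: "T \<subseteq> verts H"
  show "T \<subseteq> f ` {v \<in> verts G. f v \<in> T}"
  proof
    fix y assume "y \<in> T"
    then have "f_inv y \<in> {v \<in> verts G. f v \<in> T}" "y = f (f_inv y)" using inv_map_verts T by auto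
    then show "y \<in> f ` {v \<in> verts G. f v \<in> T}" by blast
  qed
qed blast

lemma convex_image_iff: assumes "S \<subseteq> verts G" shows "convex H (f ` S) \<longleftrightarrow> convex G S"
proof
  assume c: "convex H (f ` S)"
  show "convex G S" unfolding convex_def
  proof (intro conjI ballI subsetI)
    fix x y w assume xy: "x \<in> S" "y \<in> S" and w: "w \<in> interval G x y"
    then have "w \<in> verts G" "f w \<in> interval H (f x) (f y)"
      using interval_verts[of G x y] interval_image assms by blast+
    then show "w \<in> S" using c xy map_mem_image_iff[OF assms] unfolding convex_def by blast
  qed (use assms in blast)
next
  assume c: "convex G S"
  show "convex H (f ` S)" unfolding convex_def
  proof (intro conjI ballI)
    show "f ` S \<subseteq> verts H" using assms map_verts by blast
    fix a b assume "a \<in> f ` S" "b \<in> f ` S"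
    then obtain x y where xy: "x \<in> S" "y \<in> S" "a = f x" "b = f y" by blast
    have "interval G x y \<subseteq> S" using c xy unfolding convex_def by blast
    moreover have "interval H a b = f ` interval G x y" using interval_image xy assms by auto
    ultimately show "interval H a b \<subseteq> f ` S" by blast
  qed
qed

lemma copoint_image:
  assumes "copoint G x C" "x \<in> verts G"
  shows "copoint H (f x) (f ` C)"
  unfolding copoint_def
proof (intro conjI allI impI)
  have C: "C \<subseteq> verts G" using copoint_verts[OF assms(1)] .
  show "convex H (f ` C)" "f x \<notin> f ` C"
    using assms convex_image_iff[OF C] map_mem_image_iff[OF C] unfolding copoint_def by auto
  fix D assume D: "convex H D \<and> f ` C \<subseteq> D \<and> f x \<notin> D"
  define D' where "D' = {v \<in> verts G. f v \<in> D}"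
  have D'V: "D' \<subseteq> verts G" and fD': "f ` D' = D"
    using image_preimage[of D] D unfolding D'_def convex_def by auto
  have "convex G D'" using convex_image_iff[OF D'V] D fD' by simp
  moreover have "C \<subseteq> D'" "x \<notin> D'" using D C assms(2) unfolding D'_def by auto
  ultimately have "D' = C" using assms(1) unfolding copoint_def by blast
  then show "D = f ` C" using fD' by simp
qed

lemma ph_le_1_pullback: "ph_le_1 H \<Longrightarrow> ph_le_1 G"
  unfolding ph_le_1_def
proof (intro ballI allI impI)
  fix x C assume ph: "\<forall>y\<in>verts H. \<forall>D. copoint H y D \<longrightarrow> convex H (interval_set H (insert y D))"
    and x: "x \<in> verts G" and c: "copoint G x C"
  have S: "insert x C \<subseteq> verts G" using x copoint_verts[OF c] by blast
  have "convex H (interval_set H (f ` insert x C))"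
    using ph copoint_image[OF c x] map_verts[OF x] by simp
  then show "convex G (interval_set G (insert x C))"
    using interval_set_image[OF S] convex_image_iff[OF interval_set_verts] by simp
qed

end

lemma ph_homogeneous_pullback:
  assumes iso: "graph_iso_map G H f" and c: "connected_graph G" and ph: "ph_homogeneous H"
  shows "ph_homogeneous G"
  unfolding ph_homogeneous_iff
proof (intro allI impI)
  fix B assume B: "finite B \<and> convex G B"
  show "ph_le_1 (induced G B)"
  proof (cases "B = {}")
    case True then show ?thesis unfolding ph_le_1_def by simp
  next
    case False
    interpret graph_isomorphism G H f using iso c by unfold_locales
    have BV: "B \<subseteq> verts G" using B unfolding convex_def by blast
    interpret induced: graph_isomorphism "induced G B" "induced H (f ` B)" f
      using graph_iso_map_induced[OF iso BV] connected_induced_convex[OF c _ False] B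
      by unfold_locales auto
    have "ph_le_1 (induced H (f ` B))"
      using ph B convex_image_iff[OF BV] unfolding ph_homogeneous_iff by blast
    then show ?thesis using induced.ph_le_1_pullback by blast
  qed
qed

section \<open>Partial cubes as graphs metrized by cuts\<close>

lemma verts_hypercube: "verts (hypercube X) = {S. S \<subseteq> X \<and> finite S}"
  by (simp add: hypercube_def verts_def)

lemma edges_hypercube:
  "edges (hypercube X) =
     {(S, T). S \<subseteq> X \<and> finite S \<and> T \<subseteq> X \<and> finite T \<and> card (sym_diff S T) = 1}"
  by (simp add: hypercube_def edges_def)

lemma graph_hypercube: "graph (hypercube X)"
  unfolding graph_def verts_hypercube edges_hypercube
  by (auto simp: sym_def irrefl_def Un_commute)

lemma dist_hypercube_ge:
  assumes "reach (hypercube X) S T"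
  shows "card (sym_diff S T) \<le> dist (hypercube X) S T"
proof -
  let ?f = "\<lambda>Z. card (sym_diff Z T)"
  have T: "finite T" using reach_verts[OF assms] by (simp add: verts_hypercube)
  have "?f u \<le> ?f v + 1" if e: "(u, v) \<in> edges (hypercube X)" for u v
  proof -
    have fu: "finite u" "finite v" "card (sym_diff u v) = 1" using e by (auto simp: edges_hypercube)
    have "sym_diff u T \<subseteq> sym_diff u v \<union> sym_diff v T" by blast
    then have "card (sym_diff u T) \<le> card (sym_diff u v \<union> sym_diff v T)"
      by (intro card_mono) (use fu T in auto)
    also have "\<dots> \<le> card (sym_diff u v) + card (sym_diff v T)" by (rule card_Un_le)
    finally show ?thesis using fu by simp
  qed
  then show ?thesis using dist_potential[OF assms, of ?f] by simp
qed

lemma walk_hypercube: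
  assumes "S \<in> verts (hypercube X)" "T \<in> verts (hypercube X)"
  shows "\<exists>p. walk (hypercube X) p \<and> hd p = S \<and> last p = T \<and> length p = Suc (card (sym_diff S T))"
  using assms
proof (induction "card (sym_diff S T)" arbitrary: S)
  case 0
  have "finite (sym_diff S T)" using 0 by (simp add: verts_hypercube)
  then have "S = T" using 0 by auto
  then show ?case using 0 by (intro exI[of _ "[S]"]) (simp add: walk_def)
next
  case (Suc n)
  have fin: "finite S" "finite T" "S \<subseteq> X" "T \<subseteq> X" using Suc.prems by (auto simp: verts_hypercube)
  obtain e where e: "e \<in> sym_diff S T" using Suc.hyps(2) by (metis card.empty ex_in_conv nat.distinct(1))
  define S' where "S' = (if e \<in> S then S - {e} else insert e S)"
  have S'v: "S' \<in> verts (hypercube X)" using fin e unfolding S'_def verts_hypercube by auto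
  have "sym_diff S S' = {e}" unfolding S'_def by auto
  then have edge: "(S, S') \<in> edges (hypercube X)"
    using S'v Suc.prems(1) by (simp add: edges_hypercube verts_hypercube)
  have "sym_diff S' T = sym_diff S T - {e}" using e unfolding S'_def by auto
  then have "card (sym_diff S' T) = n" using Suc.hyps(2) e fin by (simp add: card_Diff_singleton)
  then obtain p where p: "walk (hypercube X) p" "hd p = S'" "last p = T" "length p = Suc n"
    using Suc.hyps(1)[of S'] S'v Suc.prems(2) by auto
  have "walk (hypercube X) (S # p)"
    using p edge Suc.prems(1) by (cases p) (auto simp: walk_Cons)
  then show ?case using p Suc.hyps(2) by (intro exI[of _ "S # p"]) (auto simp: walk_def)
qed

lemma dist_hypercube:
  assumes "S \<in> verts (hypercube X)" "T \<in> verts (hypercube X)"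
  shows "dist (hypercube X) S T = card (sym_diff S T)"
proof -
  obtain p where p: "walk (hypercube X) p" "hd p = S" "last p = T" "length p = Suc (card (sym_diff S T))"
    using walk_hypercube[OF assms] by blast
  then have r: "reach (hypercube X) S T" unfolding reach_def by blast
  have "dist (hypercube X) S T \<le> card (sym_diff S T)" using dist_le_walk[OF p(1-3)] p(4) by simp
  then show ?thesis using dist_hypercube_ge[OF r] by simp
qed

text \<open>A cut is given by an index \<open>j\<close> and one of its sides, \<open>h j\<close>. For an isometric subgraph of the
  hypercube on \<open>X\<close> the cuts are indexed by the coordinates in \<open>X\<close>; \<open>cut_metric_graph\<close> is the
  intrinsic form of \<open>partial_cube\<close>.\<close>

definition separating :: "'j set \<Rightarrow> ('j \<Rightarrow> 'a set) \<Rightarrow> 'a \<Rightarrow> 'a \<Rightarrow> 'j set" where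
  "separating J h u v = {j \<in> J. (u \<in> h j) \<noteq> (v \<in> h j)}"

definition cut_metric :: "'a graph \<Rightarrow> 'j set \<Rightarrow> ('j \<Rightarrow> 'a set) \<Rightarrow> bool" where
  "cut_metric G J h \<longleftrightarrow> (\<forall>u\<in>verts G. \<forall>v\<in>verts G.
     finite (separating J h u v) \<and> dist G u v = card (separating J h u v))"

definition cut_metric_graph :: "'a graph \<Rightarrow> bool" where
  "cut_metric_graph G \<longleftrightarrow> graph G \<and> connected_graph G \<and> (\<exists>F :: 'a set set. cut_metric G F id)"

lemma separating_sym: "separating J h u v = separating J h v u"
  unfolding separating_def by blast

text \<open>Distinct cuts with the same side would both separate the ends of some edge.\<close>
lemma cut_metric_image:
  assumes g: "graph G" and c: "connected_graph G" and m: "cut_metric G J h"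
  shows "cut_metric G (h ` J) id"
  unfolding cut_metric_def
proof (intro ballI)
  fix u v assume uv: "u \<in> verts G" "v \<in> verts G"
  have inj: "inj_on h (separating J h u v)"
  proof (rule inj_onI, rule ccontr)
    fix j j' assume j: "j \<in> separating J h u v" "j' \<in> separating J h u v" "h j = h j'" "j \<noteq> j'"
    obtain q where q: "walk G q" "hd q = u" "last q = v"
      using connected_reach[OF c uv] unfolding reach_def by blast
    have "\<exists>a b. (a, b) \<in> edges G \<and> (a \<in> h j) \<noteq> (b \<in> h j)"
    proof (cases "u \<in> h j")
      case True
      then have "v \<notin> h j" using j unfolding separating_def by blast
      then show ?thesis using walk_crosses[OF q(1), of "\<lambda>z. z \<in> h j"] q True by auto
    next
      case False
      then have "v \<in> h j" using j unfolding separating_def by blast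
      then show ?thesis using walk_crosses[OF q(1), of "\<lambda>z. z \<notin> h j"] q False by auto
    qed
    then obtain a b where ab: "(a, b) \<in> edges G" "(a \<in> h j) \<noteq> (b \<in> h j)" by blast
    have abv: "a \<in> verts G" "b \<in> verts G" using ab g unfolding graph_def by auto
    have "card (separating J h a b) = 1" "finite (separating J h a b)"
      using m abv dist_edge[OF g ab(1)] unfolding cut_metric_def by auto
    moreover have "{j, j'} \<subseteq> separating J h a b" using ab j unfolding separating_def by auto
    ultimately have "card {j, j'} \<le> 1" using card_mono by metis
    then show False using j(4) by simp
  qed
  have "separating (h ` J) id u v = h ` separating J h u v" unfolding separating_def by auto
  then show "finite (separating (h ` J) id u v) \<and> dist G u v = card (separating (h ` J) id u v)"
    using m uv card_image[OF inj] unfolding cut_metric_def by auto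
qed

lemma cut_metric_graphI:
  "graph G \<Longrightarrow> connected_graph G \<Longrightarrow> cut_metric G J h \<Longrightarrow> cut_metric_graph G"
  using cut_metric_image unfolding cut_metric_graph_def by blast

lemma cut_metric_graph_pullback:
  assumes iso: "graph_iso_map G H f" and g: "graph G" and H: "cut_metric_graph H"
  shows "cut_metric_graph G"
proof -
  obtain F :: "'b set set" where F: "cut_metric H F id" and cH: "connected_graph H"
    using H unfolding cut_metric_graph_def by blast
  interpret inv: graph_isomorphism H G "inv_into (verts G) f"
    using graph_iso_map_inv[OF iso] cH by unfold_locales
  interpret graph_isomorphism G H f using iso inv.connected_target by unfold_locales
  have "cut_metric G F (\<lambda>S. {v \<in> verts G. f v \<in> S})" unfolding cut_metric_def
  proof (intro ballI)
    fix u v assume uv: "u \<in> verts G" "v \<in> verts G"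
    have "separating F (\<lambda>S. {v \<in> verts G. f v \<in> S}) u v = separating F id (f u) (f v)"
      using uv unfolding separating_def by auto
    then show "finite (separating F (\<lambda>S. {v \<in> verts G. f v \<in> S}) u v) \<and>
        dist G u v = card (separating F (\<lambda>S. {v \<in> verts G. f v \<in> S}) u v)"
      using F map_verts uv dist_map unfolding cut_metric_def by simp
  qed
  then show ?thesis using cut_metric_graphI[OF g inv.connected_target] by blast
qed

lemma cut_metric_graph_if_partial_cube:
  fixes G :: "'a graph"
  assumes "partial_cube G" shows "cut_metric_graph G"
proof -
  obtain X :: "'a set set" and H where g: "graph G" and iso: "isometric_subgraph H (hypercube X)"
    and gi: "graph_iso G H"
    using assms unfolding partial_cube_def by blast
  obtain f where f: "graph_iso_map G H f" using gi graph_iso_iff_map by blast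
  have sub: "subgraph H (hypercube X)" and cH: "connected_graph H"
    and dH: "\<forall>u\<in>verts H. \<forall>v\<in>verts H. dist H u v = dist (hypercube X) u v"
    using iso unfolding isometric_subgraph_def by auto
  interpret inv: graph_isomorphism H G "inv_into (verts G) f"
    using graph_iso_map_inv[OF f] cH by unfold_locales
  interpret graph_isomorphism G H f using f inv.connected_target by unfold_locales
  define h where "h = (\<lambda>e. {v \<in> verts G. e \<in> f v})"
  have "cut_metric G X h" unfolding cut_metric_def
  proof (intro ballI conjI)
    fix u v assume uv: "u \<in> verts G" "v \<in> verts G"
    have fuv: "f u \<in> verts (hypercube X)" "f v \<in> verts (hypercube X)"
      using map_verts uv sub unfolding subgraph_def by auto
    have e: "separating X h u v = sym_diff (f u) (f v)"
      using fuv uv unfolding separating_def h_def verts_hypercube by auto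
    then show "finite (separating X h u v)" using fuv by (simp add: verts_hypercube)
    have "dist G u v = dist (hypercube X) (f u) (f v)" using dist_map dH map_verts uv by simp
    then show "dist G u v = card (separating X h u v)" using e dist_hypercube[OF fuv] by simp
  qed
  then show ?thesis using cut_metric_graphI g inv.connected_target by blast
qed

lemma separating_embedding:
  assumes F: "cut_metric G F id" and v0: "v0 \<in> verts G" and uv: "u \<in> verts G" "v \<in> verts G"
  shows "separating F id u v0 \<in> verts (hypercube F)"
    and "dist G u v = card (sym_diff (separating F id u v0) (separating F id v v0))"
proof -
  show "separating F id u v0 \<in> verts (hypercube F)"
    using F uv v0 unfolding cut_metric_def verts_hypercube separating_def by auto
  have "sym_diff (separating F id u v0) (separating F id v v0) = separating F id u v"
    unfolding separating_def by auto
  then show "dist G u v = card (sym_diff (separating F id u v0) (separating F id v v0))"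
    using F uv unfolding cut_metric_def by simp
qed

lemma partial_cube_if_cut_metric_graph:
  fixes G :: "'a graph"
  assumes "cut_metric_graph G" shows "partial_cube G"
proof -
  obtain F :: "'a set set" where g: "graph G" and c: "connected_graph G" and F: "cut_metric G F id"
    using assms unfolding cut_metric_graph_def by blast
  obtain v0 where v0: "v0 \<in> verts G" using c unfolding connected_graph_def by blast
  define \<phi> where "\<phi> = (\<lambda>v. separating F id v v0)"
  define H where "H = induced (hypercube F) (\<phi> ` verts G)"
  have \<phi>_verts: "\<phi> v \<in> verts (hypercube F)" if "v \<in> verts G" for v
    using separating_embedding(1)[OF F v0 that that] unfolding \<phi>_def .
  have dist_\<phi>: "dist G u v = card (sym_diff (\<phi> u) (\<phi> v))" if "u \<in> verts G" "v \<in> verts G" for u v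
    using separating_embedding(2)[OF F v0 that] unfolding \<phi>_def .
  have inj: "inj_on \<phi> (verts G)"
  proof (rule inj_onI)
    fix u v assume uv: "u \<in> verts G" "v \<in> verts G" "\<phi> u = \<phi> v"
    then have "dist G u v = 0" using dist_\<phi> by simp
    then show "u = v" using dist_eq_0_imp_eq[OF connected_reach[OF c uv(1,2)]] by blast
  qed
  have "(u, v) \<in> edges G \<longleftrightarrow> (\<phi> u, \<phi> v) \<in> edges H" if uv: "u \<in> verts G" "v \<in> verts G" for u v
  proof -
    have "(u, v) \<in> edges G \<longleftrightarrow> dist G u v = 1"
      using dist_edge[OF g] edge_if_dist_1[OF connected_reach[OF c uv]] by blast
    then show ?thesis
      using dist_\<phi>[OF uv] \<phi>_verts uv unfolding H_def by (auto simp: edges_hypercube verts_hypercube)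
  qed
  then have iso: "graph_iso_map G H \<phi>"
    using inj unfolding graph_iso_map_def H_def bij_betw_def by simp
  interpret graph_isomorphism G H \<phi> using iso c by unfold_locales
  have "isometric_subgraph H (hypercube F)" unfolding isometric_subgraph_def
  proof (intro conjI ballI)
    show "subgraph H (hypercube F)"
      unfolding subgraph_def H_def using graph_induced[OF graph_hypercube] \<phi>_verts by auto
    show "connected_graph H" using connected_target .
    fix a b assume "a \<in> verts H" "b \<in> verts H"
    then obtain u v where uv: "u \<in> verts G" "v \<in> verts G" "a = \<phi> u" "b = \<phi> v" unfolding H_def by auto
    then show "dist H a b = dist (hypercube F) a b"
      using dist_map dist_\<phi> dist_hypercube[OF \<phi>_verts \<phi>_verts] by simp
  qed
  then show ?thesis using g iso graph_iso_iff_map unfolding partial_cube_def by blast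
qed

lemma partial_cube_iff_cut_metric_graph: "partial_cube G \<longleftrightarrow> cut_metric_graph G"
  using cut_metric_graph_if_partial_cube partial_cube_if_cut_metric_graph by blast

section \<open>Convex subgraphs\<close>

lemma cut_metric_graph_induced_convex:
  assumes G: "cut_metric_graph G" and A: "convex G A" "A \<noteq> {}"
  shows "cut_metric_graph (induced G A)"
proof -
  obtain F :: "'a set set" where g: "graph G" and c: "connected_graph G" and F: "cut_metric G F id"
    using G unfolding cut_metric_graph_def by blast
  interpret convex_subgraph G A using convex_subgraphI c A(1) by blast
  have "cut_metric (induced G A) F (\<lambda>H. H \<inter> A)"
    using F subset_verts dist_induced unfolding cut_metric_def separating_def by (auto 4 3)
  then show ?thesis by (rule cut_metric_graphI[OF graph_induced[OF g] connected_induced_convex[OF c A]])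
qed

theorem partial_cube_ph_homogeneous_induced_convex:
  assumes "partial_cube G" "ph_homogeneous G" "convex G A" "A \<noteq> {}"
  shows "partial_cube (induced G A) \<and> ph_homogeneous (induced G A)"
  using assms cut_metric_graph_induced_convex ph_homogeneous_induced_convex
  unfolding partial_cube_iff_cut_metric_graph cut_metric_graph_def by blast

section \<open>Cartesian products\<close>

lemma verts_cart_prod: "verts (cart_prod I Gs) = PiE I (\<lambda>i. verts (Gs i))"
  by (simp add: cart_prod_def verts_def)

lemma edges_cart_prod_iff:
  "(f, g) \<in> edges (cart_prod I Gs) \<longleftrightarrow>
     f \<in> PiE I (\<lambda>i. verts (Gs i)) \<and> g \<in> PiE I (\<lambda>i. verts (Gs i)) \<and>
     (\<exists>i\<in>I. (f i, g i) \<in> edges (Gs i) \<and> (\<forall>j\<in>I. j \<noteq> i \<longrightarrow> f j = g j))"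
  by (simp add: cart_prod_def edges_def)

lemma induced_cart_prod_PiE:
  assumes "\<And>i. i \<in> I \<Longrightarrow> A i \<subseteq> verts (Gs i)"
  shows "induced (cart_prod I Gs) (PiE I A) = cart_prod I (\<lambda>i. induced (Gs i) (A i))"
proof -
  have "(f, g) \<in> edges (induced (cart_prod I Gs) (PiE I A)) \<longleftrightarrow>
      (f, g) \<in> edges (cart_prod I (\<lambda>i. induced (Gs i) (A i)))" for f g
  proof -
    have "f \<in> PiE I A \<Longrightarrow> f \<in> PiE I (\<lambda>i. verts (Gs i))" "g \<in> PiE I A \<Longrightarrow> g \<in> PiE I (\<lambda>i. verts (Gs i))"
      using assms by (auto simp: PiE_iff)
    then show ?thesis
      by (auto simp: edges_cart_prod_iff PiE_iff)
  qed
  then have "edges (induced (cart_prod I Gs) (PiE I A)) = edges (cart_prod I (\<lambda>i. induced (Gs i) (A i)))"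
    by auto
  moreover have "verts (induced (cart_prod I Gs) (PiE I A)) = verts (cart_prod I (\<lambda>i. induced (Gs i) (A i)))"
    by (simp add: verts_cart_prod)
  ultimately show ?thesis by (metis prod.collapse verts_def edges_def)
qed

locale graph_product =
  fixes I :: "'i set" and Gs :: "'i \<Rightarrow> 'd graph"
  assumes factor_graph: "\<And>i. i \<in> I \<Longrightarrow> graph (Gs i)"
    and factor_connected: "\<And>i. i \<in> I \<Longrightarrow> connected_graph (Gs i)"
begin

abbreviation "P \<equiv> cart_prod I Gs"
abbreviation "V \<equiv> PiE I (\<lambda>i. verts (Gs i))"

definition differ :: "('i \<Rightarrow> 'd) \<Rightarrow> ('i \<Rightarrow> 'd) \<Rightarrow> 'i set" where
  "differ f g = {i \<in> I. f i \<noteq> g i}"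

definition coord_dist :: "'i set \<Rightarrow> ('i \<Rightarrow> 'd) \<Rightarrow> ('i \<Rightarrow> 'd) \<Rightarrow> nat" where
  "coord_dist K f g = (\<Sum>j\<in>K. dist (Gs j) (f j) (g j))"

definition proj :: "'i \<Rightarrow> ('i \<Rightarrow> 'd) set \<Rightarrow> 'd set" where
  "proj i C = (\<lambda>g. g i) ` C"

definition cylinder :: "'i \<Rightarrow> 'd set \<Rightarrow> ('i \<Rightarrow> 'd) set" where
  "cylinder i T = {g \<in> V. g i \<in> T}"

lemma verts_P: "verts P = V"
  by (rule verts_cart_prod)

lemma V_coord: "f \<in> V \<Longrightarrow> j \<in> I \<Longrightarrow> f j \<in> verts (Gs j)"
  by (auto simp: PiE_iff)

lemma fun_upd_V: "f \<in> V \<Longrightarrow> i \<in> I \<Longrightarrow> x \<in> verts (Gs i) \<Longrightarrow> f(i := x) \<in> V"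
  by (auto simp: PiE_def Pi_def extensional_def)

lemma differ_subset: "differ f g \<subseteq> I"
  unfolding differ_def by auto

lemma differ_empty_imp_eq: assumes "f \<in> V" "g \<in> V" "differ f g = {}" shows "f = g"
proof
  fix x show "f x = g x"
    using assms PiE_arb[OF assms(1)] PiE_arb[OF assms(2)] unfolding differ_def by (cases "x \<in> I") auto
qed

lemma coord_ends_in_interval:
  assumes "j \<in> I" "u \<in> verts (Gs j)" "v \<in> verts (Gs j)"
  shows "u \<in> interval (Gs j) u v" "v \<in> interval (Gs j) u v"
  using ends_in_interval[OF connected_reach[OF factor_connected[OF assms(1)] assms(2,3)]] by auto

lemma graph_P: "graph P"
  unfolding graph_def
proof (intro conjI)
  show "edges P \<subseteq> verts P \<times> verts P"
  proof
    fix e assume "e \<in> edges P"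
    moreover obtain f g where "e = (f, g)" by fastforce
    ultimately show "e \<in> verts P \<times> verts P" using edges_cart_prod_iff[of f g] verts_P by auto
  qed
  show "sym (edges P)"
  proof (rule symI)
    fix f g assume "(f, g) \<in> edges P"
    then obtain i where i: "f \<in> V" "g \<in> V" "i \<in> I" "(f i, g i) \<in> edges (Gs i)"
      "\<forall>j\<in>I. j \<noteq> i \<longrightarrow> f j = g j"
      unfolding edges_cart_prod_iff by blast
    have "(g i, f i) \<in> edges (Gs i)" using factor_graph[OF i(3)] i(4) unfolding graph_def by (meson symD)
    then show "(g, f) \<in> edges P" unfolding edges_cart_prod_iff using i by auto
  qed
  show "irrefl (edges P)" unfolding irrefl_def
  proof
    fix f show "(f, f) \<notin> edges P"
    proof
      assume "(f, f) \<in> edges P"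
      then obtain i where "i \<in> I" "(f i, f i) \<in> edges (Gs i)" unfolding edges_cart_prod_iff by blast
      then show False using factor_graph unfolding graph_def irrefl_def by blast
    qed
  qed
qed

lemma edge_differ:
  assumes "(f, g) \<in> edges P"
  shows "\<exists>i\<in>I. differ f g = {i} \<and> (f i, g i) \<in> edges (Gs i)"
proof -
  obtain i where i: "i \<in> I" "(f i, g i) \<in> edges (Gs i)" "\<forall>j\<in>I. j \<noteq> i \<longrightarrow> f j = g j"
    using assms unfolding edges_cart_prod_iff by blast
  have "f i \<noteq> g i" using i factor_graph[OF i(1)] unfolding graph_def irrefl_def by auto
  then have "differ f g = {i}" using i unfolding differ_def by auto
  then show ?thesis using i by blast
qed

lemma walk_fun_upd:
  assumes f: "f \<in> V" and i: "i \<in> I" and q: "walk (Gs i) q"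
  shows "walk P (map (\<lambda>x. f(i := x)) q)"
  unfolding walk_def
proof (intro conjI allI impI)
  show "map (\<lambda>x. f(i := x)) q \<noteq> []" using q by (simp add: walk_def)
  show "set (map (\<lambda>x. f(i := x)) q) \<subseteq> verts P"
    using q f i fun_upd_V by (auto simp: walk_def verts_P)
  fix k assume k: "Suc k < length (map (\<lambda>x. f(i := x)) q)"
  then have e: "(q ! k, q ! Suc k) \<in> edges (Gs i)" using q by (simp add: walk_def)
  have "q ! k \<in> verts (Gs i)" "q ! Suc k \<in> verts (Gs i)"
    using q k nth_mem[of k q] nth_mem[of "Suc k" q] by (auto simp: walk_def)
  then show "(map (\<lambda>x. f(i := x)) q ! k, map (\<lambda>x. f(i := x)) q ! Suc k) \<in> edges P"
    using e k f i fun_upd_V unfolding edges_cart_prod_iff by auto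
qed

lemma coord_dist_superset:
  assumes "f \<in> V" "finite K" "differ f g \<subseteq> K" "K \<subseteq> I"
  shows "coord_dist K f g = coord_dist (differ f g) f g"
  unfolding coord_dist_def
proof (rule sum.mono_neutral_right[OF assms(2,3)])
  show "\<forall>j\<in>K - differ f g. dist (Gs j) (f j) (g j) = 0"
  proof
    fix j assume j: "j \<in> K - differ f g"
    then have "f j = g j" "j \<in> I" using assms(4) unfolding differ_def by auto
    then show "dist (Gs j) (f j) (g j) = 0" using dist_self[OF V_coord[OF assms(1)]] by metis
  qed
qed

lemma walk_cart_prod:
  assumes "f \<in> V" "g \<in> V" "finite (differ f g)"
  shows "\<exists>p. walk P p \<and> hd p = f \<and> last p = g \<and> length p = Suc (coord_dist (differ f g) f g)"
  using assms
proof (induction "card (differ f g)" arbitrary: f)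
  case 0
  then have "f = g" using differ_empty_imp_eq by simp
  then show ?case using 0
    by (intro exI[of _ "[f]"]) (auto simp: walk_def verts_P coord_dist_def differ_def)
next
  case (Suc n)
  obtain i where i: "i \<in> differ f g" using Suc.hyps(2) by (metis card.empty ex_in_conv nat.distinct(1))
  have iI: "i \<in> I" using i differ_subset by blast
  have fi: "f i \<in> verts (Gs i)" "g i \<in> verts (Gs i)" using Suc.prems iI by (auto simp: V_coord)
  obtain q where q: "walk (Gs i) q" "hd q = f i" "last q = g i"
    "length q = Suc (dist (Gs i) (f i) (g i))"
    using dist_witness[OF connected_reach[OF factor_connected[OF iI] fi]] by blast
  define f' where "f' = f(i := g i)"
  have f'V: "f' \<in> V" using fun_upd_V[OF Suc.prems(1) iI fi(2)] f'_def by simp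
  have df': "differ f' g = differ f g - {i}" unfolding differ_def f'_def by auto
  have "card (differ f' g) = n" using df' Suc.hyps(2) Suc.prems(3) i by simp
  then obtain p where p: "walk P p" "hd p = f'" "last p = g"
    "length p = Suc (coord_dist (differ f' g) f' g)"
    using Suc.hyps(1)[of f'] f'V Suc.prems df' by auto
  let ?l = "map (\<lambda>x. f(i := x)) q"
  have wl: "walk P ?l" using walk_fun_upd[OF Suc.prems(1) iI q(1)] .
  have hl: "hd ?l = f" "last ?l = f'" using q walk_nonempty[OF q(1)] by (auto simp: hd_map last_map f'_def)
  have w: "walk P (?l @ tl p)" using walk_append[OF wl p(1)] hl p by simp
  have "coord_dist (differ f g) f g = dist (Gs i) (f i) (g i) + coord_dist (differ f g - {i}) f g"
    unfolding coord_dist_def using Suc.prems(3) i by (simp add: sum.remove)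
  moreover have "coord_dist (differ f g - {i}) f g = coord_dist (differ f' g) f' g"
    unfolding coord_dist_def df' by (intro sum.cong refl) (simp add: f'_def)
  ultimately show ?case
    using w hl p q walk_nonempty[OF p(1)] walk_nonempty[OF q(1)]
    by (intro exI[of _ "?l @ tl p"]) (auto simp: last_append_tl)
qed

text \<open>Along an edge of the product the sum of coordinate distances to a fixed vertex drops by at
  most one.\<close>
lemma coord_dist_le_walk:
  assumes "walk P p"
  shows "finite (differ (hd p) (last p)) \<and>
    coord_dist (differ (hd p) (last p)) (hd p) (last p) \<le> length p - 1"
  using assms
proof (induction p)
  case Nil then show ?case by (simp add: walk_def)
next
  case (Cons f p)
  show ?case
  proof (cases p)
    case Nil then show ?thesis by (simp add: differ_def coord_dist_def)
  next
    case (Cons f' r)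
    have w: "walk P p" and e: "(f, f') \<in> edges P"
      using Cons.prems \<open>p = f' # r\<close> by (auto simp: walk_Cons)
    let ?g = "last p"
    have IH: "finite (differ f' ?g)" "coord_dist (differ f' ?g) f' ?g \<le> length p - 1"
      using Cons.IH[OF w] \<open>p = f' # r\<close> by auto
    obtain i where i: "i \<in> I" "differ f f' = {i}" "(f i, f' i) \<in> edges (Gs i)"
      using edge_differ[OF e] by blast
    have fV: "f \<in> V" "f' \<in> V" using e unfolding edges_cart_prod_iff by auto
    have gV: "?g \<in> V" using walk_last[OF w] verts_P by metis
    define K where "K = insert i (differ f' ?g)"
    have K: "finite K" "K \<subseteq> I" using IH(1) i differ_subset unfolding K_def by auto
    have "differ f ?g \<subseteq> differ f f' \<union> differ f' ?g" unfolding differ_def by auto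
    then have dK: "differ f ?g \<subseteq> K" "differ f' ?g \<subseteq> K" using i(2) unfolding K_def by auto
    have fi: "f i \<in> verts (Gs i)" "f' i \<in> verts (Gs i)" "?g i \<in> verts (Gs i)"
      using fV gV i V_coord by auto
    have "dist (Gs i) (f i) (?g i) \<le> dist (Gs i) (f i) (f' i) + dist (Gs i) (f' i) (?g i)"
      using dist_triangle connected_reach[OF factor_connected[OF i(1)]] fi by metis
    moreover have "dist (Gs i) (f i) (f' i) = 1" using dist_edge[OF factor_graph[OF i(1)] i(3)] .
    moreover have "coord_dist (K - {i}) f ?g = coord_dist (K - {i}) f' ?g"
      unfolding coord_dist_def using i K by (intro sum.cong refl) (auto simp: differ_def)
    moreover have "coord_dist K h ?g = dist (Gs i) (h i) (?g i) + coord_dist (K - {i}) h ?g" for h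
      unfolding coord_dist_def using sum.remove[OF K(1)] K_def by blast
    ultimately have "coord_dist K f ?g \<le> 1 + coord_dist K f' ?g" by simp
    then have "coord_dist (differ f ?g) f ?g \<le> 1 + (length p - 1)"
      using coord_dist_superset[OF fV(1) K(1) dK(1) K(2)] coord_dist_superset[OF fV(2) K(1) dK(2) K(2)]
        IH(2) by simp
    then show ?thesis using dK(1) K(1) finite_subset \<open>p = f' # r\<close> by auto
  qed
qed

lemma reach_P_iff: "reach P f g \<longleftrightarrow> f \<in> V \<and> g \<in> V \<and> finite (differ f g)"
proof
  assume r: "reach P f g"
  then obtain p where "walk P p" "hd p = f" "last p = g" unfolding reach_def by blast
  then show "f \<in> V \<and> g \<in> V \<and> finite (differ f g)"
    using coord_dist_le_walk reach_verts[OF r] verts_P by metis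
next
  assume "f \<in> V \<and> g \<in> V \<and> finite (differ f g)"
  then show "reach P f g" using walk_cart_prod unfolding reach_def by blast
qed

lemma dist_P:
  assumes "reach P f g" shows "dist P f g = coord_dist (differ f g) f g"
proof -
  have h: "f \<in> V" "g \<in> V" "finite (differ f g)" using assms reach_P_iff by auto
  obtain p where p: "walk P p" "hd p = f" "last p = g" "length p = Suc (coord_dist (differ f g) f g)"
    using walk_cart_prod[OF h] by blast
  obtain q where q: "walk P q" "hd q = f" "last q = g" "length q = Suc (dist P f g)"
    using dist_witness[OF assms] by blast
  show ?thesis using dist_le_walk[OF p(1-3)] p(4) coord_dist_le_walk[OF q(1)] q by simp
qed

lemma dist_P_superset:
  assumes "reach P f g" "finite K" "differ f g \<subseteq> K" "K \<subseteq> I"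
  shows "dist P f g = coord_dist K f g"
  using dist_P[OF assms(1)] coord_dist_superset[OF _ assms(2-4)] reach_P_iff assms(1) by metis

lemma interval_P_imp_coords:
  assumes r: "reach P f g" and "h \<in> interval P f g"
  shows "h \<in> V \<and> (\<forall>j\<in>I. h j \<in> interval (Gs j) (f j) (g j))"
proof -
  have fg: "f \<in> V" "g \<in> V" "finite (differ f g)" using r unfolding reach_P_iff by blast+
  have h: "reach P f h" "reach P h g" "dist P f h + dist P h g = dist P f g"
    using interval_iff_dist[OF r] assms(2) by auto
  have hV: "h \<in> V" using h(1) unfolding reach_P_iff by blast
  define K where "K = differ f g \<union> differ f h \<union> differ h g"
  have "finite (differ f h)" "finite (differ h g)" using h(1,2) unfolding reach_P_iff by blast+
  then have K: "finite K" "K \<subseteq> I" using fg(3) differ_subset unfolding K_def by auto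
  have v: "f j \<in> verts (Gs j)" "g j \<in> verts (Gs j)" "h j \<in> verts (Gs j)" if "j \<in> I" for j
    using fg hV that V_coord by auto
  have "dist P f h = coord_dist K f h" using dist_P_superset[OF h(1) K(1) _ K(2)] unfolding K_def by blast
  moreover have "dist P h g = coord_dist K h g"
    using dist_P_superset[OF h(2) K(1) _ K(2)] unfolding K_def by blast
  moreover have "dist P f g = coord_dist K f g" using dist_P_superset[OF r K(1) _ K(2)] unfolding K_def by blast
  ultimately have "coord_dist K f h + coord_dist K h g = coord_dist K f g" using h(3) by simp
  moreover have tri: "dist (Gs j) (f j) (g j) \<le> dist (Gs j) (f j) (h j) + dist (Gs j) (h j) (g j)"
    if "j \<in> K" for j
    using that K v dist_triangle connected_reach[OF factor_connected] by (meson subsetD)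
  ultimately have sum_eq: "(\<Sum>j\<in>K. dist (Gs j) (f j) (g j)) =
      (\<Sum>j\<in>K. dist (Gs j) (f j) (h j) + dist (Gs j) (h j) (g j))"
    unfolding coord_dist_def by (simp add: sum.distrib)
  have "h j \<in> interval (Gs j) (f j) (g j)" if j: "j \<in> I" for j
  proof (cases "j \<in> K")
    case True
    then show ?thesis using sum_mono_inv[OF sum_eq tri True K(1)]
      interval_iff_dist_connected[OF factor_connected[OF j] v(1,2)[OF j]] v(3)[OF j] by simp
  next
    case False
    then have "h j = f j" using j unfolding K_def differ_def by auto
    then show ?thesis using coord_ends_in_interval(1)[OF j v(1,2)[OF j]] by simp
  qed
  then show ?thesis using hV by blast
qed

lemma coords_imp_interval_P:
  assumes r: "reach P f g" and h: "h \<in> V" "\<forall>j\<in>I. h j \<in> interval (Gs j) (f j) (g j)"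
  shows "h \<in> interval P f g"
proof -
  have fg: "f \<in> V" "g \<in> V" "finite (differ f g)" using r unfolding reach_P_iff by blast+
  have "h j = f j" if j: "j \<in> I" "f j = g j" for j
    using h j interval_self[OF V_coord[OF fg(1) j(1)]] by auto
  then have d1: "differ f h \<subseteq> differ f g" "differ h g \<subseteq> differ f g" unfolding differ_def by auto
  then have r1: "reach P f h" "reach P h g"
    unfolding reach_P_iff using fg h finite_subset by blast+
  have "dist (Gs j) (f j) (h j) + dist (Gs j) (h j) (g j) = dist (Gs j) (f j) (g j)" if "j \<in> differ f g" for j
  proof -
    have j: "j \<in> I" using that differ_subset by blast
    show ?thesis
      using h j interval_iff_dist_connected[OF factor_connected[OF j] V_coord[OF fg(1) j] V_coord[OF fg(2) j]]
      by blast
  qed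
  then have "dist P f h + dist P h g = dist P f g"
    using dist_P_superset[OF r1(1) fg(3) d1(1) differ_subset] dist_P_superset[OF r1(2) fg(3) d1(2) differ_subset]
      dist_P[OF r] unfolding coord_dist_def by (simp add: sum.distrib[symmetric])
  then show "h \<in> interval P f g" using interval_iff_dist[OF r] r1 by blast
qed

lemma interval_P_iff:
  "reach P f g \<Longrightarrow> h \<in> interval P f g \<longleftrightarrow> h \<in> V \<and> (\<forall>j\<in>I. h j \<in> interval (Gs j) (f j) (g j))"
  using interval_P_imp_coords coords_imp_interval_P by blast

definition comp_verts :: "('i \<Rightarrow> 'd) \<Rightarrow> ('i \<Rightarrow> 'd) set" where
  "comp_verts a = {b. reach P a b}"

abbreviation "W a \<equiv> induced P (comp_verts a)"

lemma weak_cart_prod_eq: "weak_cart_prod I Gs a = W a"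
  unfolding weak_cart_prod_def component_def comp_verts_def reach_def ..

lemma comp_verts_eq: "a \<in> V \<Longrightarrow> comp_verts a = {b \<in> V. finite (differ a b)}"
  unfolding comp_verts_def using reach_P_iff[of a] by blast

lemma reach_comp_verts: "b \<in> comp_verts a \<Longrightarrow> c \<in> comp_verts a \<Longrightarrow> reach P b c"
  unfolding comp_verts_def using reach_trans[OF reach_sym[OF graph_P]] by blast

lemma self_in_comp_verts: "a \<in> V \<Longrightarrow> a \<in> comp_verts a"
  unfolding comp_verts_def using reach_refl[of a P] verts_P by simp

lemma convex_comp_verts: "convex P (comp_verts a)"
  unfolding convex_def
proof (intro conjI ballI subsetI)
  fix b assume "b \<in> comp_verts a" then show "b \<in> verts P" unfolding comp_verts_def using reach_verts by fast
next
  fix b c z assume bc: "b \<in> comp_verts a" "c \<in> comp_verts a" and z: "z \<in> interval P b c"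
  have "reach P b z" using interval_iff_dist[OF reach_comp_verts[OF bc]] z by blast
  then show "z \<in> comp_verts a" using bc unfolding comp_verts_def using reach_trans[of P a b z] by simp
qed

lemma connected_W: "a \<in> V \<Longrightarrow> connected_graph (W a)"
  unfolding connected_graph_def
proof (intro conjI ballI)
  assume "a \<in> V"
  then show "verts (W a) \<noteq> {}" using self_in_comp_verts by auto
  fix b c assume "b \<in> verts (W a)" "c \<in> verts (W a)"
  then have "reach (W a) b c" using reach_induced_convex[OF convex_comp_verts _ _ reach_comp_verts] by auto
  then show "\<exists>p. walk (W a) p \<and> hd p = b \<and> last p = c" unfolding reach_def .
qed

lemma cut_metric_graph_W:
  assumes a: "a \<in> V" and cm: "\<And>i. i \<in> I \<Longrightarrow> cut_metric_graph (Gs i)"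
  shows "cut_metric_graph (W a)"
proof -
  define F where "F = (\<lambda>i. SOME F :: 'd set set. cut_metric (Gs i) F id)"
  have F: "cut_metric (Gs i) (F i) id" if "i \<in> I" for i
    using cm[OF that] unfolding cut_metric_graph_def F_def by (metis (mono_tags) someI_ex)
  define h where "h = (\<lambda>(i :: 'i, H :: 'd set). {f :: 'i \<Rightarrow> 'd. f i \<in> H})"
  have "cut_metric (W a) (Sigma I F) h" unfolding cut_metric_def
  proof (intro ballI)
    fix b c assume "b \<in> verts (W a)" "c \<in> verts (W a)"
    then have bc: "b \<in> comp_verts a" "c \<in> comp_verts a" by auto
    have r: "reach P b c" using reach_comp_verts[OF bc] .
    then have bcV: "b \<in> V" "c \<in> V" "finite (differ b c)" unfolding reach_P_iff by blast+
    have coord: "i \<in> I \<Longrightarrow> finite (separating (F i) id (b i) (c i)) \<and>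
        card (separating (F i) id (b i) (c i)) = dist (Gs i) (b i) (c i)" for i
      using F bcV(1,2) V_coord unfolding cut_metric_def by simp
    have e: "separating (Sigma I F) h b c = Sigma (differ b c) (\<lambda>i. separating (F i) id (b i) (c i))"
      unfolding separating_def h_def differ_def by auto
    have fin: "\<forall>i\<in>differ b c. finite (separating (F i) id (b i) (c i))"
      using coord differ_subset by blast
    have "card (separating (Sigma I F) h b c) = (\<Sum>i\<in>differ b c. card (separating (F i) id (b i) (c i)))"
      unfolding e using card_SigmaI[OF bcV(3) fin] .
    also have "\<dots> = (\<Sum>i\<in>differ b c. dist (Gs i) (b i) (c i))"
      using coord differ_subset[of b c] by (intro sum.cong refl) blast
    also have "\<dots> = dist P b c" using dist_P[OF r] unfolding coord_dist_def by simp
    also have "\<dots> = dist (W a) b c"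
      using reach_induced_convex[OF convex_comp_verts bc r] by simp
    finally show "finite (separating (Sigma I F) h b c) \<and>
        dist (W a) b c = card (separating (Sigma I F) h b c)"
      using e fin bcV(3) by auto
  qed
  then show ?thesis by (rule cut_metric_graphI[OF graph_induced[OF graph_P] connected_W[OF a]])
qed

lemma convex_proj:
  assumes C: "convex P C" and R: "\<forall>b\<in>C. \<forall>c\<in>C. reach P b c" and i: "i \<in> I"
  shows "convex (Gs i) (proj i C)"
  unfolding convex_def
proof (intro conjI ballI subsetI)
  have CV: "C \<subseteq> V" using C verts_P unfolding convex_def by blast
  fix x assume "x \<in> proj i C"
  then show "x \<in> verts (Gs i)" using CV V_coord[OF _ i] unfolding proj_def by blast
next
  have CV: "C \<subseteq> V" using C verts_P unfolding convex_def by blast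
  fix x y w assume xy: "x \<in> proj i C" "y \<in> proj i C" and w: "w \<in> interval (Gs i) x y"
  obtain b c where bc: "b \<in> C" "c \<in> C" "x = b i" "y = c i" using xy unfolding proj_def by blast
  have bV: "b \<in> V" "c \<in> V" using bc CV by auto
  have "w \<in> verts (Gs i)" using w interval_verts[of "Gs i"] by blast
  then have hV: "b(i := w) \<in> V" using fun_upd_V[OF bV(1) i] by blast
  have "\<forall>j\<in>I. (b(i := w)) j \<in> interval (Gs j) (b j) (c j)"
    using w bc coord_ends_in_interval(1)[OF _ V_coord[OF bV(1)] V_coord[OF bV(2)]] by simp
  then have "b(i := w) \<in> interval P b c" using interval_P_iff[of b c] R bc hV by blast
  then have "b(i := w) \<in> C" using C bc unfolding convex_def by blast
  then show "w \<in> proj i C" unfolding proj_def by (rule rev_image_eqI) simp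
qed

text \<open>Moving one coordinate at a time from a vertex of \<open>C\<close> towards \<open>f\<close> stays inside \<open>C\<close>.\<close>
lemma mem_convex_if_proj:
  assumes C: "convex P C" and R: "\<forall>b\<in>C. \<forall>c\<in>C. reach P b c" and f: "f \<in> V"
    and pr: "\<forall>i\<in>I. f i \<in> proj i C"
  shows "c0 \<in> C \<Longrightarrow> finite (differ f c0) \<Longrightarrow> f \<in> C"
proof (induction "card (differ f c0)" arbitrary: c0)
  case 0
  have CV: "C \<subseteq> V" using C verts_P unfolding convex_def by blast
  then have "f = c0" using 0 differ_empty_imp_eq[OF f] by auto
  then show ?case using 0 by simp
next
  case (Suc n)
  have CV: "C \<subseteq> V" using C verts_P unfolding convex_def by blast
  have c0V: "c0 \<in> V" using Suc.prems CV by blast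
  obtain i where i: "i \<in> differ f c0" using Suc.hyps(2) by (metis card.empty ex_in_conv nat.distinct(1))
  have iI: "i \<in> I" using i differ_subset by blast
  obtain b where b: "b \<in> C" "b i = f i" using pr iI unfolding proj_def by auto
  have bV: "b \<in> V" using b CV by blast
  define c' where "c' = c0(i := f i)"
  have c'V: "c' \<in> V" unfolding c'_def using fun_upd_V[OF c0V iI V_coord[OF f iI]] .
  have "\<forall>j\<in>I. c' j \<in> interval (Gs j) (c0 j) (b j)"
    using coord_ends_in_interval[OF _ V_coord[OF c0V] V_coord[OF bV]] b(2) unfolding c'_def
    by (metis fun_upd_apply)
  then have "c' \<in> interval P c0 b" using interval_P_iff[of c0 b c'] R Suc.prems(1) b(1) c'V by blast
  then have c'C: "c' \<in> C" using C Suc.prems b(1) unfolding convex_def by blast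
  have "differ f c' = differ f c0 - {i}" unfolding differ_def c'_def by auto
  then have "card (differ f c') = n" "finite (differ f c')" using Suc.hyps(2) Suc.prems(2) i by simp_all
  then show ?case using Suc.hyps(1) c'C by blast
qed

end

locale connected_product = graph_product +
  assumes finite_differ: "\<And>f g. f \<in> V \<Longrightarrow> g \<in> V \<Longrightarrow> finite (differ f g)"
begin

lemma reach_V: "f \<in> V \<Longrightarrow> g \<in> V \<Longrightarrow> reach P f g"
  unfolding reach_P_iff using finite_differ by blast

lemma connected_P: "V \<noteq> {} \<Longrightarrow> connected_graph P"
  using reach_V unfolding connected_graph_def verts_P reach_def by blast

lemma interval_P_coords:
  assumes "f \<in> V" "g \<in> V" "h \<in> V"
  shows "h \<in> interval P f g \<longleftrightarrow> (\<forall>j\<in>I. h j \<in> interval (Gs j) (f j) (g j))"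
  using interval_P_iff[OF reach_V[OF assms(1,2)], of h] assms(3) by blast

lemma convex_cylinder:
  assumes T: "convex (Gs i) T" and i: "i \<in> I"
  shows "convex P (cylinder i T)"
  unfolding convex_def
proof (intro conjI ballI subsetI)
  fix f assume "f \<in> cylinder i T" then show "f \<in> verts P" unfolding cylinder_def verts_P by blast
next
  fix f g h assume fg: "f \<in> cylinder i T" "g \<in> cylinder i T" and h: "h \<in> interval P f g"
  have fgV: "f \<in> V" "g \<in> V" using fg unfolding cylinder_def by auto
  have hV: "h \<in> V" using h interval_verts[of P f g] verts_P by blast
  have "h i \<in> interval (Gs i) (f i) (g i)" using interval_P_coords[OF fgV hV] h i by blast
  then have "h i \<in> T" using T fg unfolding convex_def cylinder_def by blast
  then show "h \<in> cylinder i T" unfolding cylinder_def using hV by blast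
qed

lemma copoint_cylinder:
  assumes cp: "copoint P x C" and x: "x \<in> V" and ne: "C \<noteq> {}"
  obtains i where "i \<in> I" "C = cylinder i (proj i C)" "copoint (Gs i) (x i) (proj i C)"
proof -
  have Cc: "convex P C" and xC: "x \<notin> C"
    and max: "\<And>D. convex P D \<Longrightarrow> C \<subseteq> D \<Longrightarrow> x \<notin> D \<Longrightarrow> D = C"
    using cp unfolding copoint_def by blast+
  have CV: "C \<subseteq> V" using Cc verts_P unfolding convex_def by blast
  obtain c0 where c0: "c0 \<in> C" using ne by blast
  have "\<exists>i\<in>I. x i \<notin> proj i C"
    using mem_convex_if_proj[OF Cc _ x _ c0] reach_V finite_differ[OF x] c0 CV xC by blast
  then obtain i where i: "i \<in> I" "x i \<notin> proj i C" by blast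
  let ?K = "proj i C"
  have Kc: "convex (Gs i) ?K" using convex_proj[OF Cc _ i(1)] reach_V CV by blast
  have C_cyl: "C \<subseteq> cylinder i D" if "?K \<subseteq> D" for D
    using that CV unfolding cylinder_def proj_def by auto
  have cyl_eq: "cylinder i D = C" if "convex (Gs i) D" "?K \<subseteq> D" "x i \<notin> D" for D
    using max[OF convex_cylinder[OF that(1) i(1)] C_cyl[OF that(2)]] that(3) unfolding cylinder_def by blast
  have "copoint (Gs i) (x i) ?K" unfolding copoint_def
  proof (intro conjI allI impI)
    fix D assume D: "convex (Gs i) D \<and> ?K \<subseteq> D \<and> x i \<notin> D"
    have "w \<in> ?K" if "w \<in> D" for w
    proof -
      have "w \<in> verts (Gs i)" using that D unfolding convex_def by blast
      then have "x(i := w) \<in> cylinder i D" using that fun_upd_V[OF x i(1)] unfolding cylinder_def by simp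
      then have "x(i := w) \<in> cylinder i ?K" using cyl_eq[of D] cyl_eq[OF Kc subset_refl i(2)] D by simp
      then show ?thesis unfolding cylinder_def by simp
    qed
    then show "D = ?K" using D by blast
  qed (use Kc i in auto)
  then show ?thesis using that i(1) cyl_eq[OF Kc subset_refl i(2)] by simp
qed

lemma interval_set_insert_cylinder:
  assumes x: "x \<in> V" and i: "i \<in> I" and K: "convex (Gs i) K" "K \<noteq> {}"
  shows "interval_set P (insert x (cylinder i K)) = cylinder i (interval_set (Gs i) (insert (x i) K))"
proof -
  have KV: "K \<subseteq> verts (Gs i)" using K unfolding convex_def by blast
  obtain k where k: "k \<in> K" using K(2) by blast
  have "x(i := k) \<in> cylinder i K" using fun_upd_V[OF x i] k KV unfolding cylinder_def by auto
  then have lhs: "interval_set P (insert x (cylinder i K)) =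
      cylinder i K \<union> (\<Union>c\<in>cylinder i K. interval P x c)"
    using interval_set_insert_convex[OF graph_P connected_P convex_cylinder[OF K(1) i]] x verts_P by blast
  have rhs: "interval_set (Gs i) (insert (x i) K) = K \<union> (\<Union>t\<in>K. interval (Gs i) (x i) t)"
    using interval_set_insert_convex[OF factor_graph[OF i] factor_connected[OF i] K V_coord[OF x i]] .
  show ?thesis unfolding lhs rhs
  proof (intro equalityI subsetI)
    fix z assume "z \<in> cylinder i K \<union> (\<Union>c\<in>cylinder i K. interval P x c)"
    then consider "z \<in> cylinder i K" | c where "c \<in> cylinder i K" "z \<in> interval P x c" by blast
    then show "z \<in> cylinder i (K \<union> (\<Union>t\<in>K. interval (Gs i) (x i) t))"
    proof cases
      case 2
      then have "c \<in> V" "z \<in> V" using interval_verts[of P x c] verts_P unfolding cylinder_def by auto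
      then show ?thesis using 2 interval_P_coords[OF x] i unfolding cylinder_def by blast
    qed (auto simp: cylinder_def)
  next
    fix z assume "z \<in> cylinder i (K \<union> (\<Union>t\<in>K. interval (Gs i) (x i) t))"
    then have zV: "z \<in> V" and "z i \<in> K \<or> (\<exists>t\<in>K. z i \<in> interval (Gs i) (x i) t)"
      unfolding cylinder_def by auto
    then consider "z i \<in> K" | t where "t \<in> K" "z i \<in> interval (Gs i) (x i) t" by blast
    then show "z \<in> cylinder i K \<union> (\<Union>c\<in>cylinder i K. interval P x c)"
    proof cases
      case 1 then show ?thesis using zV unfolding cylinder_def by blast
    next
      case 2
      have c: "z(i := t) \<in> cylinder i K" using 2 fun_upd_V[OF zV i] KV unfolding cylinder_def by auto
      have "\<forall>j\<in>I. z j \<in> interval (Gs j) (x j) ((z(i := t)) j)"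
        using 2 coord_ends_in_interval(2)[OF _ V_coord[OF x] V_coord[OF zV]] by simp
      then have "z \<in> interval P x (z(i := t))"
        using interval_P_coords[OF x fun_upd_V[OF zV i] zV] KV 2(1) by blast
      then show ?thesis using c by blast
    qed
  qed
qed

lemma ph_le_1_P:
  assumes ph: "\<And>i. i \<in> I \<Longrightarrow> ph_le_1 (Gs i)"
  shows "ph_le_1 P"
  unfolding ph_le_1_def
proof (intro ballI allI impI)
  fix x C assume "x \<in> verts P" and cp: "copoint P x C"
  then have x: "x \<in> V" using verts_P by simp
  show "convex P (interval_set P (insert x C))"
  proof (cases "C = {}")
    case True
    then show ?thesis
      using interval_set_singleton[OF \<open>x \<in> verts P\<close>] convex_singleton[OF \<open>x \<in> verts P\<close>] by simp
  next
    case False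
    then obtain i where i: "i \<in> I" "C = cylinder i (proj i C)" "copoint (Gs i) (x i) (proj i C)"
      using copoint_cylinder[OF cp x] by blast
    have "proj i C \<noteq> {}" using False unfolding proj_def by blast
    moreover have "convex (Gs i) (interval_set (Gs i) (insert (x i) (proj i C)))"
      using ph[OF i(1)] i(3) V_coord[OF x i(1)] unfolding ph_le_1_def by blast
    ultimately show ?thesis
      using interval_set_insert_cylinder[OF x i(1)] i convex_cylinder copoint_def by metis
  qed
qed

end

context graph_product
begin

lemma convex_subgraph_comp_verts: "convex_subgraph P (comp_verts a)"
  using convex_comp_verts reach_comp_verts by unfold_locales

lemma proj_outside_differ:
  assumes "a0 \<in> A" "i \<in> I" "i \<notin> (\<Union>b\<in>A. differ a0 b)"
  shows "proj i A = {a0 i}"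
proof
  show "{a0 i} \<subseteq> proj i A" using assms(1) unfolding proj_def by blast
  show "proj i A \<subseteq> {a0 i}"
  proof
    fix y assume "y \<in> proj i A"
    then obtain b where "b \<in> A" "y = b i" unfolding proj_def by blast
    then show "y \<in> {a0 i}" using assms(2,3) unfolding differ_def by auto
  qed
qed

lemma finite_convex_eq_PiE_proj:
  assumes A: "finite A" "convex P A" "A \<subseteq> comp_verts a" and a0: "a0 \<in> A"
  shows "A = PiE I (\<lambda>i. proj i A)"
proof
  have AV: "A \<subseteq> V" using A(2) verts_P unfolding convex_def by blast
  show "A \<subseteq> PiE I (\<lambda>i. proj i A)" using AV unfolding proj_def by (auto simp: PiE_iff)
  have R: "\<forall>b\<in>A. \<forall>c\<in>A. reach P b c" using A(3) reach_comp_verts by blast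
  have fin: "finite (\<Union>b\<in>A. differ a0 b)" using A(1) R a0 reach_P_iff by blast
  show "PiE I (\<lambda>i. proj i A) \<subseteq> A"
  proof
    fix f assume f: "f \<in> PiE I (\<lambda>i. proj i A)"
    have "f \<in> V" using f AV unfolding proj_def by (force simp: PiE_iff)
    moreover have "differ f a0 \<subseteq> (\<Union>b\<in>A. differ a0 b)"
      using f proj_outside_differ[OF a0] unfolding differ_def by (force simp: PiE_iff)
    then have "finite (differ f a0)" using fin finite_subset by blast
    ultimately show "f \<in> A"
      using mem_convex_if_proj[OF A(2) R _ _ a0] f by (simp add: PiE_iff)
  qed
qed

lemma connected_product_proj:
  assumes A: "finite A" "convex P A" "A \<subseteq> comp_verts a" and a0: "a0 \<in> A"
  shows "connected_product I (\<lambda>i. induced (Gs i) (proj i A))"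
proof -
  let ?D = "\<Union>b\<in>A. differ a0 b"
  have R: "\<forall>b\<in>A. \<forall>c\<in>A. reach P b c" using A(3) reach_comp_verts by blast
  show ?thesis
  proof
    fix i assume i: "i \<in> I"
    show "graph (induced (Gs i) (proj i A))" using graph_induced[OF factor_graph[OF i]] .
    show "connected_graph (induced (Gs i) (proj i A))"
      using connected_induced_convex[OF factor_connected[OF i] convex_proj[OF A(2) R i]] a0
      unfolding proj_def by blast
  next
    fix f g assume fg: "f \<in> PiE I (\<lambda>i. verts (induced (Gs i) (proj i A)))"
      "g \<in> PiE I (\<lambda>i. verts (induced (Gs i) (proj i A)))"
    have "differ f g \<subseteq> ?D"
    proof
      fix i assume "i \<in> differ f g"
      then have i: "i \<in> I" "f i \<noteq> g i" unfolding differ_def by auto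
      have fg_i: "f i \<in> proj i A" "g i \<in> proj i A" using fg i(1) by (auto simp: PiE_iff)
      show "i \<in> ?D"
      proof (rule ccontr)
        assume "i \<notin> ?D"
        then have "proj i A = {a0 i}" by (rule proj_outside_differ[OF a0 i(1)])
        then show False using i(2) fg_i by simp
      qed
    qed
    moreover have "finite ?D" using A(1) R a0 reach_P_iff by blast
    ultimately show "finite (differ f g)" using finite_subset by blast
  qed
qed

lemma ph_homogeneous_W:
  assumes a: "a \<in> V" and ph: "\<And>i. i \<in> I \<Longrightarrow> ph_homogeneous (Gs i)"
  shows "ph_homogeneous (W a)"
  unfolding ph_homogeneous_iff
proof (intro allI impI)
  interpret convex_subgraph P "comp_verts a" using convex_subgraph_comp_verts .
  fix A assume "finite A \<and> convex (W a) A"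
  then have A: "finite A" "convex P A" "A \<subseteq> comp_verts a" using convex_induced_iff by auto
  show "ph_le_1 (induced (W a) A)"
  proof (cases "A = {}")
    case True then show ?thesis unfolding ph_le_1_def by simp
  next
    case False
    then obtain a0 where a0: "a0 \<in> A" by blast
    let ?Ks = "\<lambda>i. induced (Gs i) (proj i A)"
    have R: "\<forall>b\<in>A. \<forall>c\<in>A. reach P b c" using A(3) reach_comp_verts by blast
    have proj_convex: "convex (Gs i) (proj i A)" if "i \<in> I" for i using convex_proj[OF A(2) R that] .
    have "induced (W a) A = cart_prod I ?Ks"
      using induced_induced[OF A(3)] finite_convex_eq_PiE_proj[OF A a0]
        induced_cart_prod_PiE[of I "\<lambda>i. proj i A" Gs] proj_convex unfolding convex_def by simp
    moreover interpret factors: connected_product I ?Ks using connected_product_proj[OF A a0] .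
    have "ph_le_1 (?Ks i)" if i: "i \<in> I" for i
      using ph[OF i] A(1) proj_convex[OF i] unfolding ph_homogeneous_iff proj_def by blast
    ultimately show ?thesis using factors.ph_le_1_P by simp
  qed
qed

end

theorem partial_cube_ph_homogeneous_weak_cart_prod:
  assumes "\<forall>i\<in>I. partial_cube (Gs i) \<and> ph_homogeneous (Gs i)" "a \<in> PiE I (\<lambda>i. verts (Gs i))"
  shows "partial_cube (weak_cart_prod I Gs a) \<and> ph_homogeneous (weak_cart_prod I Gs a)"
proof -
  have cm: "cut_metric_graph (Gs i)" if "i \<in> I" for i
    using assms(1) that partial_cube_iff_cut_metric_graph by blast
  interpret graph_product I Gs using cm unfolding cut_metric_graph_def by unfold_locales blast+
  show ?thesis
    using cut_metric_graph_W[OF assms(2) cm] ph_homogeneous_W[OF assms(2)] assms(1)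
    unfolding weak_cart_prod_eq partial_cube_iff_cut_metric_graph by blast
qed

text \<open>For finitely many factors the product is connected, hence its own weak product.\<close>
theorem partial_cube_ph_homogeneous_cart_prod:
  assumes "finite I" "\<forall>i\<in>I. partial_cube (Gs i) \<and> ph_homogeneous (Gs i)"
  shows "partial_cube (cart_prod I Gs) \<and> ph_homogeneous (cart_prod I Gs)"
proof -
  have cm: "cut_metric_graph (Gs i)" if "i \<in> I" for i
    using assms(2) that partial_cube_iff_cut_metric_graph by blast
  interpret graph_product I Gs using cm unfolding cut_metric_graph_def by unfold_locales blast+
  have "V \<noteq> {}" using cm unfolding cut_metric_graph_def connected_graph_def by (simp add: PiE_eq_empty_iff)
  then obtain a where a: "a \<in> V" by blast
  have "finite (differ a b)" for b using finite_subset[OF differ_subset assms(1)] .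
  then have "comp_verts a = V" using comp_verts_eq[OF a] by simp
  then have "weak_cart_prod I Gs a = P" using weak_cart_prod_eq induced_verts[OF graph_P] verts_P by simp
  then show ?thesis using partial_cube_ph_homogeneous_weak_cart_prod[OF assms(2) a] by simp
qed

section \<open>Gated sets\<close>

locale cut_partial_cube =
  fixes G :: "'a graph" and F :: "'a set set"
  assumes graph: "graph G" and connected: "connected_graph G" and cut_metric: "cut_metric G F id"
begin

lemma interval_iff_separating_disjoint:
  assumes v: "x \<in> verts G" "y \<in> verts G" "z \<in> verts G"
  shows "y \<in> interval G x z \<longleftrightarrow> separating F id x y \<inter> separating F id y z = {}"
proof -
  let ?X = "separating F id x y" and ?Y = "separating F id y z"
  have fX: "finite ?X" "finite ?Y" using cut_metric v unfolding cut_metric_def by auto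
  have sym_diff: "separating F id x z = (?X \<union> ?Y) - (?X \<inter> ?Y)" unfolding separating_def by auto
  have "card (separating F id x z) = card (?X \<union> ?Y) - card (?X \<inter> ?Y)"
    unfolding sym_diff using fX by (intro card_Diff_subset) auto
  also have "\<dots> = card ?X + card ?Y - 2 * card (?X \<inter> ?Y)"
    using card_Un_Int[OF fX] by simp
  finally have e: "card (separating F id x z) = card ?X + card ?Y - 2 * card (?X \<inter> ?Y)" .
  have le: "card (?X \<inter> ?Y) \<le> card ?X" using fX by (simp add: card_mono)
  have "y \<in> interval G x z \<longleftrightarrow> dist G x y + dist G y z = dist G x z"
    using interval_iff_dist_connected[OF connected v(1) v(3)] v(2) by blast
  also have "\<dots> \<longleftrightarrow> card ?X + card ?Y = card (separating F id x z)"
    using cut_metric v unfolding cut_metric_def by simp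
  also have "\<dots> \<longleftrightarrow> card (?X \<inter> ?Y) = 0" using e le by auto
  also have "\<dots> \<longleftrightarrow> ?X \<inter> ?Y = {}" using fX by simp
  finally show ?thesis .
qed

end

locale gated_set =
  fixes G :: "'a graph" and A :: "'a set"
  assumes graph: "graph G" and connected: "connected_graph G" and gated: "gated G A"
begin

lemma subset_verts: "A \<subseteq> verts G"
  using gated unfolding gated_def by blast

definition gate :: "'a \<Rightarrow> 'a" where
  "gate x = (SOME y. y \<in> A \<and> (\<forall>z\<in>A. y \<in> interval G x z))"

lemma gate: assumes "x \<in> verts G" shows "gate x \<in> A" "\<And>z. z \<in> A \<Longrightarrow> gate x \<in> interval G x z"
proof -
  have "\<exists>y. y \<in> A \<and> (\<forall>z\<in>A. y \<in> interval G x z)" using gated assms unfolding gated_def by blast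
  then have "gate x \<in> A \<and> (\<forall>z\<in>A. gate x \<in> interval G x z)" unfolding gate_def by (rule someI_ex)
  then show "gate x \<in> A" "\<And>z. z \<in> A \<Longrightarrow> gate x \<in> interval G x z" by blast+
qed

lemma gate_verts: "x \<in> verts G \<Longrightarrow> gate x \<in> verts G"
  using gate(1) subset_verts by blast

lemma dist_via_gate:
  assumes "x \<in> verts G" "z \<in> A"
  shows "dist G x z = dist G x (gate x) + dist G (gate x) z"
proof -
  have "z \<in> verts G" using assms(2) subset_verts by blast
  then show ?thesis
    using gate(2)[OF assms] interval_iff_dist_connected[OF connected assms(1), of z "gate x"] by simp
qed

lemma gate_id: assumes "x \<in> A" shows "gate x = x"
proof -
  have x: "x \<in> verts G" using assms subset_verts by blast
  have "gate x \<in> interval G x x" using gate(2)[OF x assms] .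
  then show ?thesis using interval_self[OF x] by simp
qed

lemma reachable: "x \<in> verts G \<Longrightarrow> y \<in> verts G \<Longrightarrow> reach G x y"
  using connected_reach[OF connected] .

lemma convex_gated: "convex G A"
  unfolding convex_def
proof (intro conjI ballI subsetI)
  fix x assume "x \<in> A" then show "x \<in> verts G" using subset_verts by blast
next
  fix x y w assume xy: "x \<in> A" "y \<in> A" and w: "w \<in> interval G x y"
  have v: "x \<in> verts G" "y \<in> verts G" using xy subset_verts by auto
  have wv: "w \<in> verts G" and e: "dist G x w + dist G w y = dist G x y"
    using w interval_iff_dist_connected[OF connected v] by auto
  let ?p = "gate w"
  have pv: "?p \<in> verts G" using gate_verts[OF wv] .
  have "dist G w x = dist G w ?p + dist G ?p x" using dist_via_gate[OF wv xy(1)] .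
  moreover have "dist G w y = dist G w ?p + dist G ?p y" using dist_via_gate[OF wv xy(2)] .
  moreover have "dist G x y \<le> dist G x ?p + dist G ?p y"
    by (rule dist_triangle[OF reachable[OF v(1) pv] reachable[OF pv v(2)]])
  moreover have "dist G x w = dist G w x" "dist G x ?p = dist G ?p x"
    using dist_sym[OF graph reachable[OF v(1) wv]] dist_sym[OF graph reachable[OF v(1) pv]] by auto
  ultimately have "dist G w ?p = 0" using e by linarith
  then have "w = ?p" using dist_eq_0_imp_eq[OF reachable[OF wv pv]] by simp
  then show "w \<in> A" using gate(1)[OF wv] by simp
qed

lemma gate_mem_convex:
  assumes "convex G C" "c \<in> C" "C \<inter> A \<noteq> {}"
  shows "gate c \<in> C"
proof -
  obtain z where z: "z \<in> C" "z \<in> A" using assms(3) by blast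
  have "c \<in> verts G" using assms unfolding convex_def by blast
  then show ?thesis using gate(2)[OF _ z(2)] assms(1,2) z(1) unfolding convex_def by blast
qed

lemma mem_interval_gates:
  assumes uv: "u \<in> verts G" "v \<in> verts G" and z: "z \<in> A" "z \<in> interval G u v"
  shows "z \<in> interval G (gate u) (gate v)"
proof -
  have zv: "z \<in> verts G" using z subset_verts by blast
  let ?a = "gate u" and ?b = "gate v"
  have av: "?a \<in> verts G" "?b \<in> verts G" using gate_verts uv by auto
  have e: "dist G u z + dist G z v = dist G u v"
    using z(2) interval_iff_dist_connected[OF connected uv] by blast
  have d1: "dist G u z = dist G u ?a + dist G ?a z" using dist_via_gate[OF uv(1) z(1)] .
  have d2: "dist G v z = dist G v ?b + dist G ?b z" using dist_via_gate[OF uv(2) z(1)] .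
  have s: "dist G z v = dist G v z" "dist G z ?b = dist G ?b z" "dist G ?b v = dist G v ?b"
    using dist_sym[OF graph reachable[OF zv uv(2)]] dist_sym[OF graph reachable[OF zv av(2)]]
      dist_sym[OF graph reachable[OF av(2) uv(2)]] by auto
  have "dist G ?a ?b \<le> dist G ?a z + dist G z ?b"
    by (rule dist_triangle[OF reachable[OF av(1) zv] reachable[OF zv av(2)]])
  moreover have "dist G ?a v \<le> dist G ?a ?b + dist G ?b v"
    by (rule dist_triangle[OF reachable[OF av(1) av(2)] reachable[OF av(2) uv(2)]])
  moreover have "dist G u v \<le> dist G u ?a + dist G ?a v"
    by (rule dist_triangle[OF reachable[OF uv(1) av(1)] reachable[OF av(1) uv(2)]])
  ultimately have "dist G ?a z + dist G z ?b = dist G ?a ?b" using e d1 d2 s by linarith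
  then show ?thesis using interval_iff_dist_connected[OF connected av] zv by blast
qed

lemma interval_set_Int_gated:
  assumes S: "S \<subseteq> verts G"
  shows "interval_set G S \<inter> A \<subseteq> interval_set G (gate ` S)"
proof
  fix z assume "z \<in> interval_set G S \<inter> A"
  then obtain u v where uv: "u \<in> S" "v \<in> S" "z \<in> interval G u v" "z \<in> A"
    unfolding interval_set_def by blast
  then have "z \<in> interval G (gate u) (gate v)" using mem_interval_gates S by blast
  then show "z \<in> interval_set G (gate ` S)" using uv unfolding interval_set_def by blast
qed

lemma interval_set_insert_gate:
  assumes x: "x \<in> verts G" and C: "convex G C" "C \<inter> A \<noteq> {}"
  shows "interval_set G (insert (gate x) (C \<inter> A)) \<subseteq> interval_set G (insert x C)"
    and "interval_set G (insert x C) \<inter> A \<subseteq> interval_set G (insert (gate x) (C \<inter> A))"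
proof -
  have CV: "C \<subseteq> verts G" using C unfolding convex_def by blast
  have SV: "insert x C \<subseteq> verts G" using x CV by blast
  have "interval G (gate x) t \<subseteq> interval_set G (insert x C)" if "t \<in> C \<inter> A" for t
  proof -
    have "interval G (gate x) t \<subseteq> interval G x t"
      using interval_subset_interval[OF connected x _ gate(2)[OF x]] that CV by blast
    then show ?thesis using that unfolding interval_set_def by blast
  qed
  moreover have "C \<inter> A \<subseteq> interval_set G (insert x C)" using subset_interval_set[OF SV] by blast
  moreover have "interval_set G (insert (gate x) (C \<inter> A)) = (C \<inter> A) \<union> (\<Union>t\<in>C \<inter> A. interval G (gate x) t)"
    using interval_set_insert_convex[OF graph connected convex_Int[OF C(1) convex_gated] C(2)]
      gate_verts[OF x] by blast
  ultimately show "interval_set G (insert (gate x) (C \<inter> A)) \<subseteq> interval_set G (insert x C)" by blast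
  have "gate ` insert x C \<subseteq> insert (gate x) (C \<inter> A)"
    using gate_mem_convex[OF C(1) _ C(2)] gate(1) CV by blast
  then show "interval_set G (insert x C) \<inter> A \<subseteq> interval_set G (insert (gate x) (C \<inter> A))"
    using interval_set_Int_gated[OF SV] interval_set_mono by blast
qed

lemma gated_induced_Int:
  assumes B: "convex G B" "B \<inter> A \<noteq> {}"
  shows "gated (induced G B) (B \<inter> A)"
  unfolding gated_def
proof (intro conjI ballI)
  interpret convex_subgraph G B using convex_subgraphI[OF connected B(1)] .
  show "B \<inter> A \<subseteq> verts (induced G B)" by simp
  fix x assume "x \<in> verts (induced G B)"
  then have x: "x \<in> B" "x \<in> verts G" using subset_verts by auto
  have "gate x \<in> B \<inter> A" using gate_mem_convex[OF B(1) x(1) B(2)] gate(1)[OF x(2)] by blast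
  moreover have "\<forall>z\<in>B \<inter> A. gate x \<in> interval (induced G B) x z"
    using gate(2)[OF x(2)] interval_induced x(1) by auto
  ultimately show "\<exists>y\<in>B \<inter> A. \<forall>z\<in>B \<inter> A. y \<in> interval (induced G B) x z" by blast
qed

end

locale gated_set_cuts = gated_set G A + cut_partial_cube G F for G :: "'a graph" and A F
begin

text \<open>A cut separating two vertices of \<open>A\<close> cannot separate a vertex from its gate:
  it would separate the gate from both that vertex and one of the two vertices of \<open>A\<close>.\<close>
lemma gate_same_side:
  assumes H: "H \<in> F" and ab: "a \<in> A" "b \<in> A" "(a \<in> H) \<noteq> (b \<in> H)" and x: "x \<in> verts G"
  shows "(x \<in> H) = (gate x \<in> H)"
proof (rule ccontr)
  assume ne: "(x \<in> H) \<noteq> (gate x \<in> H)"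
  obtain z where z: "z \<in> A" "(gate x \<in> H) \<noteq> (z \<in> H)" using ab by blast
  have "gate x \<in> interval G x z" using gate(2)[OF x z(1)] .
  then have "separating F id x (gate x) \<inter> separating F id (gate x) z = {}"
    using interval_iff_separating_disjoint[OF x gate_verts[OF x]] z(1) subset_verts by blast
  moreover have "H \<in> separating F id x (gate x)" "H \<in> separating F id (gate x) z"
    using H ne z unfolding separating_def by auto
  ultimately show False by blast
qed

lemma gate_mem_interval:
  assumes v: "v \<in> verts G" "v' \<in> verts G" and w: "w \<in> interval G v v'"
  shows "gate w \<in> interval G (gate v) (gate v')"
proof -
  have wv: "w \<in> verts G" using w interval_verts[of G v v'] by blast
  have d: "separating F id v w \<inter> separating F id w v' = {}"
    using interval_iff_separating_disjoint[OF v(1) wv v(2)] w by blast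
  have "separating F id (gate v) (gate w) \<inter> separating F id (gate w) (gate v') = {}"
  proof (rule ccontr)
    assume "separating F id (gate v) (gate w) \<inter> separating F id (gate w) (gate v') \<noteq> {}"
    then obtain H where H: "H \<in> F" "(gate v \<in> H) \<noteq> (gate w \<in> H)" "(gate w \<in> H) \<noteq> (gate v' \<in> H)"
      unfolding separating_def by auto
    have "(u \<in> H) = (gate u \<in> H)" if "u \<in> verts G" for u
      using gate_same_side[OF H(1) gate(1)[OF v(1)] gate(1)[OF wv] H(2) that] .
    then have "H \<in> separating F id v w \<inter> separating F id w v'"
      using H v wv unfolding separating_def by auto
    then show False using d by blast
  qed
  then show ?thesis using interval_iff_separating_disjoint[OF gate_verts[OF v(1)] gate_verts[OF wv]
      gate_verts[OF v(2)]] by blast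
qed

lemma convex_gate_preimage:
  assumes "convex G S"
  shows "convex G {v \<in> verts G. gate v \<in> S}"
  unfolding convex_def
proof (intro conjI ballI subsetI)
  fix v v' w assume "v \<in> {v \<in> verts G. gate v \<in> S}" "v' \<in> {v \<in> verts G. gate v \<in> S}"
    and w: "w \<in> interval G v v'"
  then have "gate w \<in> S" using gate_mem_interval[OF _ _ w] assms unfolding convex_def by blast
  then show "w \<in> {v \<in> verts G. gate v \<in> S}" using w interval_verts[of G v v'] by blast
qed simp

text \<open>Preimages of convex subsets of \<open>A\<close> under the gate map are convex, so the maximality of \<open>C\<close>
  passes to its trace on \<open>A\<close>.\<close>
lemma copoint_induced_gate:
  assumes x: "x \<in> verts G" and cp: "copoint G x C" and CA: "C \<inter> A \<noteq> {}" and gx: "gate x \<notin> C"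
  shows "copoint (induced G A) (gate x) (C \<inter> A)"
proof -
  interpret convex_subgraph G A using convex_subgraphI[OF connected convex_gated] .
  have Cc: "convex G C" and max: "\<And>D. convex G D \<Longrightarrow> C \<subseteq> D \<Longrightarrow> x \<notin> D \<Longrightarrow> D = C"
    using cp unfolding copoint_def by blast+
  show ?thesis unfolding copoint_induced_iff
  proof (intro conjI allI impI)
    show "convex G (C \<inter> A)" using convex_Int[OF Cc convex_gated] .
    fix D assume D: "D \<subseteq> A \<and> convex G D \<and> C \<inter> A \<subseteq> D \<and> gate x \<notin> D"
    have "{v \<in> verts G. gate v \<in> D} = C"
    proof (rule max)
      show "convex G {v \<in> verts G. gate v \<in> D}" using convex_gate_preimage D by blast
      show "C \<subseteq> {v \<in> verts G. gate v \<in> D}"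
        using gate_mem_convex[OF Cc _ CA] gate(1) D Cc unfolding convex_def by blast
      show "x \<notin> {v \<in> verts G. gate v \<in> D}" using D by blast
    qed
    then show "D = C \<inter> A" using D gate_id subset_verts by force
  qed (use gx in auto)
qed

lemma convex_interval_set_gate:
  assumes ph: "ph_le_1 (induced G A)" and x: "x \<in> verts G" and cp: "copoint G x C"
    and CA: "C \<inter> A \<noteq> {}"
  shows "convex G (interval_set G (insert (gate x) (C \<inter> A)))"
proof (cases "gate x \<in> C")
  case True
  then have "insert (gate x) (C \<inter> A) = C \<inter> A" using gate(1)[OF x] by blast
  moreover have "convex G (C \<inter> A)" using cp convex_Int convex_gated unfolding copoint_def by blast
  ultimately show ?thesis using interval_set_convex_eq[of G "C \<inter> A"] by simp
next
  case False
  interpret convex_subgraph G A using convex_subgraphI[OF connected convex_gated] .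
  show ?thesis
    using ph copoint_induced_gate[OF x cp CA False] gate(1)[OF x] unfolding ph_le_1_induced_iff by blast
qed

end

section \<open>Gated amalgams\<close>

locale gated_cover =
  fixes G :: "'a graph" and A0 A1 :: "'a set"
  assumes graph: "graph G" and connected: "connected_graph G"
    and gated0: "gated G A0" and gated1: "gated G A1"
    and overlap: "A0 \<inter> A1 \<noteq> {}" and cover: "A0 \<union> A1 = verts G"
begin

sublocale G0: gated_set G A0 using graph connected gated0 by unfold_locales
sublocale G1: gated_set G A1 using graph connected gated1 by unfold_locales
sublocale C0: convex_subgraph G A0 using convex_subgraphI[OF connected G0.convex_gated] .
sublocale C1: convex_subgraph G A1 using convex_subgraphI[OF connected G1.convex_gated] .

abbreviation "gate0 \<equiv> G0.gate"
abbreviation "gate1 \<equiv> G1.gate"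

lemma swap: "gated_cover G A1 A0"
  using graph connected gated0 gated1 overlap cover by unfold_locales auto

lemma gate0_overlap: "x \<in> A1 \<Longrightarrow> gate0 x \<in> A0 \<inter> A1"
  using G0.gate_mem_convex[OF G1.convex_gated] G0.gate(1) G1.subset_verts overlap by blast

lemma gate1_overlap: "x \<in> A0 \<Longrightarrow> gate1 x \<in> A0 \<inter> A1"
  using G1.gate_mem_convex[OF G0.convex_gated] G1.gate(1) G0.subset_verts overlap by blast

lemma convex_Un_sides:
  assumes T0: "convex G T0" "T0 \<subseteq> A0" and T1: "convex G T1" "T1 \<subseteq> A1"
    and h: "h \<in> T0" "h \<in> T1" and T01: "T0 \<inter> A1 \<subseteq> T1" and T10: "T1 \<inter> A0 \<subseteq> T0"
  shows "convex G (T0 \<union> T1)"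
proof -
  have TV: "T0 \<union> T1 \<subseteq> verts G" using T0 T1 cover by blast
  have gate0_T: "gate0 u \<in> T0" if "u \<in> T0 \<union> T1" for u
  proof (cases "u \<in> T0")
    case True then show ?thesis using G0.gate_id T0(2) by auto
  next
    case False
    then have u: "u \<in> T1" "u \<in> verts G" using that TV by auto
    have "gate0 u \<in> interval G u h" using G0.gate(2)[OF u(2)] h T0(2) by blast
    then have "gate0 u \<in> T1" using T1(1) u(1) h(2) unfolding convex_def by blast
    then show ?thesis using T10 G0.gate(1)[OF u(2)] by blast
  qed
  have gate1_T: "gate1 u \<in> T1" if "u \<in> T0 \<union> T1" for u
  proof (cases "u \<in> T1")
    case True then show ?thesis using G1.gate_id T1(2) by auto
  next
    case False
    then have u: "u \<in> T0" "u \<in> verts G" using that TV by auto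
    have "gate1 u \<in> interval G u h" using G1.gate(2)[OF u(2)] h T1(2) by blast
    then have "gate1 u \<in> T0" using T0(1) u(1) h(1) unfolding convex_def by blast
    then show ?thesis using T01 G1.gate(1)[OF u(2)] by blast
  qed
  show ?thesis unfolding convex_def
  proof (intro conjI ballI subsetI)
    fix u v z assume uv: "u \<in> T0 \<union> T1" "v \<in> T0 \<union> T1" and z: "z \<in> interval G u v"
    have "z \<in> A0 \<union> A1" using z interval_verts[of G u v] cover by blast
    moreover have "z \<in> A0 \<Longrightarrow> z \<in> T0"
      using G0.mem_interval_gates[OF _ _ _ z] uv TV gate0_T T0(1) unfolding convex_def by blast
    moreover have "z \<in> A1 \<Longrightarrow> z \<in> T1"
      using G1.mem_interval_gates[OF _ _ _ z] uv TV gate1_T T1(1) unfolding convex_def by blast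
    ultimately show "z \<in> T0 \<union> T1" by blast
  qed (use TV in blast)
qed

lemma gated_cover_induced:
  assumes A: "convex G A" "A \<inter> A0 \<noteq> {}" "A \<inter> A1 \<noteq> {}"
  shows "gated_cover (induced G A) (A \<inter> A0) (A \<inter> A1)"
proof
  show "graph (induced G A)" using graph_induced[OF graph] .
  show "connected_graph (induced G A)" using connected_induced_convex[OF connected A(1)] A(2) by blast
  show "gated (induced G A) (A \<inter> A0)" "gated (induced G A) (A \<inter> A1)"
    using G0.gated_induced_Int G1.gated_induced_Int A by blast+
  obtain v where v: "v \<in> A" "v \<in> A1" using A(3) by blast
  then have "gate0 v \<in> A" using G0.gate_mem_convex[OF A(1) _ A(2)] by blast
  then show "(A \<inter> A0) \<inter> (A \<inter> A1) \<noteq> {}" using gate0_overlap[OF v(2)] by blast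
  show "A \<inter> A0 \<union> A \<inter> A1 = verts (induced G A)"
    using A(1) cover unfolding convex_def by auto
qed

definition splits :: "'a set \<Rightarrow> bool" where
  "splits H \<longleftrightarrow> (\<exists>p\<in>A0 \<inter> A1. \<exists>q\<in>A0 \<inter> A1. p \<in> H \<and> q \<notin> H)"

lemma unsplit_same_side: "\<not> splits H \<Longrightarrow> p \<in> A0 \<inter> A1 \<Longrightarrow> q \<in> A0 \<inter> A1 \<Longrightarrow> (p \<in> H) = (q \<in> H)"
  unfolding splits_def by blast

lemma splits_if_separates: "p \<in> A0 \<inter> A1 \<Longrightarrow> q \<in> A0 \<inter> A1 \<Longrightarrow> (p \<in> H) \<noteq> (q \<in> H) \<Longrightarrow> splits H"
  unfolding splits_def by blast

end

locale gated_cover_cuts = gated_cover G A0 A1 for G :: "'a graph" and A0 A1 +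
  fixes F0 F1 :: "'a set set"
  assumes cuts0: "cut_metric (induced G A0) F0 id" and cuts1: "cut_metric (induced G A1) F1 id"
begin

lemma dist_side0:
  "u \<in> A0 \<Longrightarrow> v \<in> A0 \<Longrightarrow> finite (separating F0 id u v) \<and> dist G u v = card (separating F0 id u v)"
  using cuts0 C0.dist_induced unfolding cut_metric_def by fastforce

lemma dist_side1:
  "u \<in> A1 \<Longrightarrow> v \<in> A1 \<Longrightarrow> finite (separating F1 id u v) \<and> dist G u v = card (separating F1 id u v)"
  using cuts1 C1.dist_induced unfolding cut_metric_def by fastforce

lemma unsplit_if_separates_gate:
  assumes v: "v \<in> A1" and H: "H \<in> F1" and s: "(v \<in> H) \<noteq> (gate0 v \<in> H)"
  shows "\<not> splits H"
proof
  interpret side1: cut_partial_cube "induced G A1" F1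
    using graph_induced[OF graph] connected_induced_convex[OF connected G1.convex_gated] overlap cuts1
    by unfold_locales auto
  assume "splits H"
  then obtain p q where pq: "p \<in> A0 \<inter> A1" "q \<in> A0 \<inter> A1" "p \<in> H" "q \<notin> H" unfolding splits_def by blast
  let ?b = "gate0 v"
  have b: "?b \<in> A0 \<inter> A1" using gate0_overlap[OF v] .
  obtain z where z: "z \<in> A0 \<inter> A1" "(?b \<in> H) \<noteq> (z \<in> H)" using pq by blast
  have vv: "v \<in> verts G" using v G1.subset_verts by blast
  have "?b \<in> interval G v z" using G0.gate(2)[OF vv] z by blast
  then have "?b \<in> interval (induced G A1) v z" using C1.interval_induced v z by blast
  then have "separating F1 id v ?b \<inter> separating F1 id ?b z = {}"
    using side1.interval_iff_separating_disjoint[of v ?b z] v b z by simp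
  moreover have "H \<in> separating F1 id v ?b" "H \<in> separating F1 id ?b z"
    using H s z unfolding separating_def by auto
  ultimately show False by blast
qed

text \<open>The cuts of \<open>G\<close>: the cuts of \<open>A0\<close> pulled back along the gate map to \<open>A0\<close>, and those
  cuts of \<open>A1\<close> that do not split the overlap, pulled back along the gate map to \<open>A1\<close>.\<close>
definition cuts :: "('a set + 'a set) set" where
  "cuts = Inl ` F0 \<union> Inr ` {H \<in> F1. \<not> splits H}"

definition side :: "'a set + 'a set \<Rightarrow> 'a set" where
  "side = case_sum (\<lambda>H. {v \<in> verts G. gate0 v \<in> H}) (\<lambda>H. {v \<in> verts G. gate1 v \<in> H})"

definition sep0 :: "'a \<Rightarrow> 'a \<Rightarrow> 'a set set" where "sep0 u v = separating F0 id (gate0 u) (gate0 v)"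
definition sep1 :: "'a \<Rightarrow> 'a \<Rightarrow> 'a set set" where
  "sep1 u v = {H \<in> F1. \<not> splits H \<and> (gate1 u \<in> H) \<noteq> (gate1 v \<in> H)}"

lemma separating_cuts: assumes "u \<in> verts G" "v \<in> verts G"
  shows "separating cuts side u v = Inl ` sep0 u v \<union> Inr ` sep1 u v"
  using assms unfolding separating_def cuts_def side_def sep0_def sep1_def by auto

lemma finite_sep: assumes "u \<in> verts G" "v \<in> verts G" shows "finite (sep0 u v)" "finite (sep1 u v)"
proof -
  show "finite (sep0 u v)" unfolding sep0_def using dist_side0 G0.gate(1) assms by blast
  have "sep1 u v \<subseteq> separating F1 id (gate1 u) (gate1 v)" unfolding sep1_def separating_def by auto
  moreover have "finite (separating F1 id (gate1 u) (gate1 v))" using dist_side1 G1.gate(1) assms by blast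
  ultimately show "finite (sep1 u v)" using finite_subset by blast
qed

lemma card_separating_cuts: assumes "u \<in> verts G" "v \<in> verts G"
  shows "finite (separating cuts side u v) \<and> card (separating cuts side u v) = card (sep0 u v) + card (sep1 u v)"
proof -
  have f: "finite (sep0 u v)" "finite (sep1 u v)" using finite_sep[OF assms] by auto
  have "card (Inl ` sep0 u v \<union> Inr ` sep1 u v) = card (Inl ` sep0 u v :: ('a set + 'a set) set) + card (Inr ` sep1 u v :: ('a set + 'a set) set)"
  proof (rule card_Un_disjoint)
    show "finite (Inl ` sep0 u v :: ('a set + 'a set) set)" "finite (Inr ` sep1 u v :: ('a set + 'a set) set)" using f by auto
    show "(Inl ` sep0 u v :: ('a set + 'a set) set) \<inter> Inr ` sep1 u v = {}" by auto
  qed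
  also have "\<dots> = card (sep0 u v) + card (sep1 u v)" by (simp add: card_image)
  finally show ?thesis using separating_cuts[OF assms] f by simp
qed

lemma dist_from_A0:
  assumes u: "u \<in> A0" and v: "v \<in> verts G"
  shows "dist G u v = card (sep0 u v) + card (sep1 u v)"
proof (cases "v \<in> A0")
  case True
  have "sep0 u v = separating F0 id u v" unfolding sep0_def using G0.gate_id u True by simp
  moreover have "sep1 u v = {}"
    using unsplit_same_side gate1_overlap[OF u] gate1_overlap[OF True] unfolding sep1_def by blast
  ultimately show ?thesis using dist_side0[OF u True] by simp
next
  case False
  then have v1: "v \<in> A1" using v cover by blast
  have uv: "u \<in> verts G" using u G0.subset_verts by blast
  let ?b = "gate0 v"
  have b: "?b \<in> A0 \<inter> A1" using gate0_overlap[OF v1] .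
  have "sep0 u v = separating F0 id u ?b" unfolding sep0_def using G0.gate_id u by simp
  then have cx: "card (sep0 u v) = dist G u ?b" using dist_side0[OF u] b by simp
  have "sep1 u v = separating F1 id ?b v"
  proof
    show "sep1 u v \<subseteq> separating F1 id ?b v"
      using unsplit_same_side[OF _ gate1_overlap[OF u] b] G1.gate_id[OF v1] unfolding sep1_def separating_def by auto
    show "separating F1 id ?b v \<subseteq> sep1 u v"
    proof
      fix H assume H: "H \<in> separating F1 id ?b v"
      then have H1: "H \<in> F1" "(?b \<in> H) \<noteq> (v \<in> H)" unfolding separating_def by auto
      then have ns: "\<not> splits H" using unsplit_if_separates_gate[OF v1 H1(1)] by blast
      then have "(gate1 u \<in> H) = (?b \<in> H)" using unsplit_same_side[OF _ gate1_overlap[OF u] b] by blast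
      then show "H \<in> sep1 u v" unfolding sep1_def using H1 ns G1.gate_id[OF v1] by auto
    qed
  qed
  then have cy: "card (sep1 u v) = dist G ?b v" using dist_side1[OF _ v1] b by simp
  have "dist G v u = dist G v ?b + dist G ?b u" using G0.dist_via_gate[OF v u] .
  moreover have "dist G u v = dist G v u" "dist G ?b u = dist G u ?b" "dist G v ?b = dist G ?b v"
    using dist_sym[OF graph G0.reachable] uv v b G0.subset_verts by (metis IntD1 subsetD)+
  ultimately show ?thesis using cx cy by simp
qed

lemma dist_within_A1:
  assumes u: "u \<in> A1" and v: "v \<in> A1"
  shows "dist G u v = card (sep0 u v) + card (sep1 u v)"
proof -
  let ?a = "gate0 u" and ?b = "gate0 v"
  have ab: "?a \<in> A0 \<inter> A1" "?b \<in> A0 \<inter> A1" using gate0_overlap u v by auto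
  have cx: "card (sep0 u v) = card (separating F1 id ?a ?b)"
    using dist_side0[of ?a ?b] dist_side1[of ?a ?b] ab unfolding sep0_def by auto
  define Z where "Z = {H \<in> F1. splits H \<and> (u \<in> H) \<noteq> (v \<in> H)}"
  have sep1_eq: "sep1 u v = {H \<in> F1. \<not> splits H \<and> (u \<in> H) \<noteq> (v \<in> H)}"
    unfolding sep1_def using G1.gate_id u v by simp
  have s: "separating F1 id u v = sep1 u v \<union> Z" unfolding sep1_eq Z_def separating_def by auto
  have dj: "sep1 u v \<inter> Z = {}" unfolding sep1_eq Z_def by auto
  have Zeq: "Z = separating F1 id ?a ?b"
  proof
    show "Z \<subseteq> separating F1 id ?a ?b"
    proof
      fix H assume "H \<in> Z"
      then have H: "H \<in> F1" "splits H" "(u \<in> H) \<noteq> (v \<in> H)" unfolding Z_def by auto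
      have "(u \<in> H) = (?a \<in> H)" using unsplit_if_separates_gate[OF u H(1)] H(2) by blast
      moreover have "(v \<in> H) = (?b \<in> H)" using unsplit_if_separates_gate[OF v H(1)] H(2) by blast
      ultimately show "H \<in> separating F1 id ?a ?b" using H unfolding separating_def by auto
    qed
    show "separating F1 id ?a ?b \<subseteq> Z"
    proof
      fix H assume "H \<in> separating F1 id ?a ?b"
      then have H: "H \<in> F1" "(?a \<in> H) \<noteq> (?b \<in> H)" unfolding separating_def by auto
      then have sp: "splits H" using splits_if_separates[OF ab] by blast
      have "(u \<in> H) = (?a \<in> H)" using unsplit_if_separates_gate[OF u H(1)] sp by blast
      moreover have "(v \<in> H) = (?b \<in> H)" using unsplit_if_separates_gate[OF v H(1)] sp by blast
      ultimately show "H \<in> Z" unfolding Z_def using H sp by auto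
    qed
  qed
  have uvv: "u \<in> verts G" "v \<in> verts G" using u v G1.subset_verts by auto
  have fY: "finite (sep1 u v)" "finite Z" using finite_sep[OF uvv] Zeq dist_side1 ab by auto
  have "dist G u v = card (separating F1 id u v)" using dist_side1[OF u v] by simp
  also have "\<dots> = card (sep1 u v) + card Z" unfolding s using card_Un_disjoint[OF fY dj] .
  finally show ?thesis using cx Zeq by simp
qed

lemma cut_metric_graph_G: "cut_metric_graph G"
proof -
  have "cut_metric G cuts side" unfolding cut_metric_def
  proof (intro ballI)
    fix u v assume uv: "u \<in> verts G" "v \<in> verts G"
    have "dist G u v = card (sep0 u v) + card (sep1 u v)"
    proof (cases "u \<in> A0")
      case True then show ?thesis using dist_from_A0 uv by blast
    next
      case False
      then have u1: "u \<in> A1" using uv cover by blast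
      show ?thesis
      proof (cases "v \<in> A1")
        case True then show ?thesis using dist_within_A1 u1 by blast
      next
        case False
        then have v0: "v \<in> A0" using uv cover by blast
        have "dist G v u = card (sep0 v u) + card (sep1 v u)" using dist_from_A0[OF v0 uv(1)] .
        moreover have "card (separating cuts side u v) = card (separating cuts side v u)" using separating_sym by metis
        ultimately show ?thesis using card_separating_cuts uv dist_sym[OF graph G0.reachable[OF uv]] by metis
      qed
    qed
    then show "finite (separating cuts side u v) \<and> dist G u v = card (separating cuts side u v)" using card_separating_cuts[OF uv] by simp
  qed
  then show ?thesis by (rule cut_metric_graphI[OF graph connected])
qed

end

locale gated_cover_ph = gated_cover G A0 A1 for G :: "'a graph" and A0 A1 +
  fixes F :: "'a set set"
  assumes cuts: "cut_metric G F id"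
    and ph0: "ph_le_1 (induced G A0)" and ph1: "ph_le_1 (induced G A1)"
begin

sublocale P0: gated_set_cuts G A0 F using graph connected gated0 cuts by unfold_locales
sublocale P1: gated_set_cuts G A1 F using graph connected gated1 cuts by unfold_locales

lemma swap_ph: "gated_cover_ph G A1 A0 F"
  using swap cuts ph0 ph1 unfolding gated_cover_ph_def gated_cover_ph_axioms_def by blast

lemma copoint_meets_side:
  assumes x: "x \<notin> A1" and cp: "copoint G x C"
  shows "C \<inter> A0 \<noteq> {}"
proof
  assume C0: "C \<inter> A0 = {}"
  then have "C \<subseteq> A1" using copoint_verts[OF cp] cover by blast
  then have "A1 = C" using cp G1.convex_gated x unfolding copoint_def by blast
  then show False using C0 overlap by blast
qed

text \<open>The interval set of \<open>x\<close> and \<open>C\<close> is glued from the interval sets of the gates of \<open>x\<close> and the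
  traces \<open>C \<inter> A\<^sub>k\<close>; they overlap in the gate of \<open>x\<close> in \<open>A1\<close>, which lies in \<open>A0 \<inter> A1\<close>.\<close>
lemma convex_interval_set_copoint_side:
  assumes x: "x \<in> A0" and cp: "copoint G x C" and CA0: "C \<inter> A0 \<noteq> {}"
  shows "convex G (interval_set G (insert x C))"
proof -
  have xV: "x \<in> verts G" using x G0.subset_verts by blast
  have Cc: "convex G C" using cp unfolding copoint_def by blast
  let ?S = "interval_set G (insert x C)"
  let ?T0 = "interval_set G (insert x (C \<inter> A0))"
  have gx: "gate0 x = x" using G0.gate_id[OF x] .
  have T0c: "convex G ?T0" using P0.convex_interval_set_gate[OF ph0 xV cp CA0] gx by simp
  have T0A: "?T0 \<subseteq> A0" by (rule interval_set_subset_convex[OF G0.convex_gated]) (use x in blast)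
  have S_T0: "?S \<inter> A0 = ?T0" using G0.interval_set_insert_gate[OF xV Cc CA0] T0A gx by auto
  show ?thesis
  proof (cases "C \<inter> A1 = {}")
    case True
    have "?S \<subseteq> A0"
      using interval_set_subset_convex[OF G0.convex_gated] x True copoint_verts[OF cp] cover by blast
    then show ?thesis using S_T0 T0c by (simp add: Int_absorb2)
  next
    case CA1: False
    let ?h = "gate1 x"
    let ?T1 = "interval_set G (insert ?h (C \<inter> A1))"
    have T1c: "convex G ?T1" using P1.convex_interval_set_gate[OF ph1 xV cp CA1] .
    have h: "?h \<in> A0 \<inter> A1" using gate1_overlap[OF x] .
    have T1A: "?T1 \<subseteq> A1" by (rule interval_set_subset_convex[OF G1.convex_gated]) (use h in blast)
    have S_T1: "?S \<inter> A1 = ?T1" using G1.interval_set_insert_gate[OF xV Cc CA1] T1A by auto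
    have "?h \<in> ?T1" using subset_interval_set[of "insert ?h (C \<inter> A1)" G] h G0.subset_verts
      copoint_verts[OF cp] by blast
    then have hT: "?h \<in> ?T0" "?h \<in> ?T1" using h S_T0 S_T1 by blast+
    have "?S \<subseteq> A0 \<union> A1" using interval_set_verts[of G "insert x C"] cover by simp
    then have "?S = ?T0 \<union> ?T1" using S_T0 S_T1 by blast
    moreover have "convex G (?T0 \<union> ?T1)"
      using convex_Un_sides[OF T0c T0A T1c T1A hT] S_T0 S_T1 by blast
    ultimately show ?thesis by simp
  qed
qed

lemma ph_le_1: "ph_le_1 G"
  unfolding ph_le_1_def
proof (intro ballI allI impI)
  fix x C assume x: "x \<in> verts G" and cp: "copoint G x C"
  interpret swapped: gated_cover_ph G A1 A0 F using swap_ph .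
  show "convex G (interval_set G (insert x C))"
  proof (cases "C = {}")
    case True
    then show ?thesis using interval_set_singleton[OF x] convex_singleton[OF x] by simp
  next
    case False
    then consider "x \<in> A0" "C \<inter> A0 \<noteq> {}" | "x \<in> A1" "C \<inter> A1 \<noteq> {}"
      using x cover copoint_verts[OF cp] copoint_meets_side[OF _ cp] swapped.copoint_meets_side[OF _ cp]
      by blast
    then show ?thesis
      using convex_interval_set_copoint_side swapped.convex_interval_set_copoint_side cp by cases
  qed
qed

end

context gated_cover
begin

lemma ph_homogeneous_if_sides:
  assumes cm: "cut_metric_graph G"
    and ph: "ph_homogeneous (induced G A0)" "ph_homogeneous (induced G A1)"
  shows "ph_homogeneous G"
  unfolding ph_homogeneous_iff
proof (intro allI impI)
  have side0: "ph_le_1 (induced G B)" if "finite B" "convex G B" "B \<subseteq> A0" for B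
    using ph(1) that C0.convex_induced_iff induced_induced[OF that(3)] unfolding ph_homogeneous_iff by metis
  have side1: "ph_le_1 (induced G B)" if "finite B" "convex G B" "B \<subseteq> A1" for B
    using ph(2) that C1.convex_induced_iff induced_induced[OF that(3)] unfolding ph_homogeneous_iff by metis
  fix A assume A: "finite A \<and> convex G A"
  then have AV: "A \<subseteq> A0 \<union> A1" using cover unfolding convex_def by blast
  consider "A \<inter> A1 = {}" | "A \<inter> A0 = {}" | "A \<inter> A0 \<noteq> {}" "A \<inter> A1 \<noteq> {}" by blast
  then show "ph_le_1 (induced G A)"
  proof cases
    case 1 then show ?thesis using side0 A AV by blast
  next
    case 2 then show ?thesis using side1 A AV by blast
  next
    case 3
    interpret restricted: gated_cover "induced G A" "A \<inter> A0" "A \<inter> A1"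
      using gated_cover_induced A 3 by blast
    obtain F :: "'a set set" where F: "cut_metric (induced G A) F id"
      using cut_metric_graph_induced_convex[OF cm] A 3 unfolding cut_metric_graph_def by blast
    have "ph_le_1 (induced (induced G A) (A \<inter> Ak))" if "Ak = A0 \<or> Ak = A1" for Ak
      using that side0 side1 A convex_Int[OF _ G0.convex_gated] convex_Int[OF _ G1.convex_gated]
        induced_induced[of "A \<inter> Ak" A G] by auto
    then interpret restricted_ph: gated_cover_ph "induced G A" "A \<inter> A0" "A \<inter> A1" F
      using F by unfold_locales blast+
    show ?thesis using restricted_ph.ph_le_1 .
  qed
qed

end

theorem partial_cube_ph_homogeneous_gated_amalgam:
  fixes G :: "'a graph" and G0 :: "'b graph" and G1 :: "'c graph"
  assumes "partial_cube G0" "ph_homogeneous G0" "partial_cube G1" "ph_homogeneous G1"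
    and "gated_amalgam G G0 G1"
  shows "partial_cube G \<and> ph_homogeneous G"
proof -
  obtain A0 A1 where cover: "gated_cover G A0 A1"
    and iso0: "graph_iso (induced G A0) G0" and iso1: "graph_iso (induced G A1) G1"
    using assms(5) unfolding gated_amalgam_def gated_cover_def by blast
  interpret gated_cover G A0 A1 using cover .
  obtain f0 f1 where f0: "graph_iso_map (induced G A0) G0 f0" and f1: "graph_iso_map (induced G A1) G1 f1"
    using iso0 iso1 unfolding graph_iso_iff_map by blast
  have c0: "connected_graph (induced G A0)" and c1: "connected_graph (induced G A1)"
    using connected_induced_convex[OF connected] G0.convex_gated G1.convex_gated overlap by blast+
  obtain F0 F1 :: "'a set set" where "cut_metric (induced G A0) F0 id" "cut_metric (induced G A1) F1 id"
    using cut_metric_graph_pullback[OF f0 graph_induced[OF graph]] cut_metric_graph_pullback[OF f1 graph_induced[OF graph]]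
      assms(1,3) unfolding partial_cube_iff_cut_metric_graph cut_metric_graph_def by metis
  then interpret gated_cover_cuts G A0 A1 F0 F1 by unfold_locales
  show ?thesis
    using cut_metric_graph_G ph_homogeneous_if_sides
      ph_homogeneous_pullback[OF f0 c0 assms(2)] ph_homogeneous_pullback[OF f1 c1 assms(4)]
    unfolding partial_cube_iff_cut_metric_graph by blast
qed

theorem theorem3p21:
  shows
   "(\<forall>(G :: 'a graph) A. partial_cube G \<and> ph_homogeneous G \<and> convex G A \<and> A \<noteq> {} \<longrightarrow>
        partial_cube (induced G A) \<and> ph_homogeneous (induced G A))
    \<and> (\<forall>(G :: 'a graph) (G0 :: 'b graph) (G1 :: 'c graph).
        partial_cube G0 \<and> ph_homogeneous G0 \<and> partial_cube G1 \<and> ph_homogeneous G1 \<and>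
        gated_amalgam G G0 G1 \<longrightarrow> partial_cube G \<and> ph_homogeneous G)
    \<and> (\<forall>(I :: 'i set) (Gs :: 'i \<Rightarrow> 'd graph).
        finite I \<and> (\<forall>i\<in>I. partial_cube (Gs i) \<and> ph_homogeneous (Gs i)) \<longrightarrow>
        partial_cube (cart_prod I Gs) \<and> ph_homogeneous (cart_prod I Gs))
    \<and> (\<forall>(I :: 'i set) (Gs :: 'i \<Rightarrow> 'd graph) a.
        infinite I \<and> (\<forall>i\<in>I. partial_cube (Gs i) \<and> ph_homogeneous (Gs i)) \<and>
        a \<in> PiE I (\<lambda>i. verts (Gs i)) \<longrightarrow>
        partial_cube (weak_cart_prod I Gs a) \<and> ph_homogeneous (weak_cart_prod I Gs a))"
proof (intro conjI; intro allI impI)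
  fix G :: "'a graph" and A
  assume "partial_cube G \<and> ph_homogeneous G \<and> convex G A \<and> A \<noteq> {}"
  then show "partial_cube (induced G A) \<and> ph_homogeneous (induced G A)"
    using partial_cube_ph_homogeneous_induced_convex by blast
next
  fix G :: "'a graph" and G0 :: "'b graph" and G1 :: "'c graph"
  assume "partial_cube G0 \<and> ph_homogeneous G0 \<and> partial_cube G1 \<and> ph_homogeneous G1 \<and>
    gated_amalgam G G0 G1"
  then show "partial_cube G \<and> ph_homogeneous G"
    using partial_cube_ph_homogeneous_gated_amalgam by blast
next
  fix I :: "'i set" and Gs :: "'i \<Rightarrow> 'd graph"
  assume "finite I \<and> (\<forall>i\<in>I. partial_cube (Gs i) \<and> ph_homogeneous (Gs i))"
  then show "partial_cube (cart_prod I Gs) \<and> ph_homogeneous (cart_prod I Gs)"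
    using partial_cube_ph_homogeneous_cart_prod by blast
next
  fix I :: "'i set" and Gs :: "'i \<Rightarrow> 'd graph" and a
  assume "infinite I \<and> (\<forall>i\<in>I. partial_cube (Gs i) \<and> ph_homogeneous (Gs i)) \<and>
    a \<in> PiE I (\<lambda>i. verts (Gs i))"
  then show "partial_cube (weak_cart_prod I Gs a) \<and> ph_homogeneous (weak_cart_prod I Gs a)"
    using partial_cube_ph_homogeneous_weak_cart_prod by blast
qed

end
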